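(* Let $a,b$ be integers with $1\le a<b$, and let $G$ be a graph of order $n\ge 3b(b+a+1)/a+7$. If $\rho(G)\ge\rho(H_{n,b})$, then $G$ has all fractional $[a,b]$-factors unless $G\cong H_{n,b}$.
   Context: All graphs are finite, undirected and simple. $\rho(G)$ denotes the spectral radius (largest eigenvalue of the adjacency matrix) of $G$. For graphs $G_1,G_2$, the join $G_1\nabla G_2$ is obtained from the disjoint union $G_1\cup G_2$ by adding all edges between $V(G_1)$ and $V(G_2)$. For integers $2\le b\le n-1$, $H_{n,b}:=K_{b-1}\nabla(K_1\cup K_{n-b})$. For a function $p:V(G)\to\mathbb{Z}^+$, a fractional $p$-factor of $G$ is (the spanning subgraph with edge set $\{e: w(e)>0\}$ of) a function $w:E(G)\to[0,1]$ such that $\sum_{e\in E_G(v)} w(e)=p(v)$ for every $v\in V(G)$, where $E_G(v)$ is the set of edges incident with $v$; $G$ has a fractional $p$-factor if such $w$ exists. For positive integers $a\le b$, $G$ has all fractional $[a,b]$-factors if $G$ has a fractional $p$-factor for every function $p:V(G)\to\mathbb{Z}^+$ with $a\le p(v)\le b$ for all $v\in V(G)$. *)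

theory Defs
  imports Complex_Main
begin

definition simple_graph :: "'a set \<Rightarrow> 'a set set \<Rightarrow> bool" where
  "simple_graph V E \<longleftrightarrow> finite V \<and> (\<forall>e\<in>E. e \<subseteq> V \<and> card e = 2)"

definition adj_eigenvalue :: "'a set \<Rightarrow> 'a set set \<Rightarrow> real \<Rightarrow> bool" where
  "adj_eigenvalue V E \<mu> \<longleftrightarrow>
     (\<exists>x :: 'a \<Rightarrow> real. (\<exists>v\<in>V. x v \<noteq> 0) \<and>
        (\<forall>v\<in>V. (\<Sum>u\<in>{u\<in>V. {u, v} \<in> E}. x u) = \<mu> * x v))"

definition spectral_radius :: "'a set \<Rightarrow> 'a set set \<Rightarrow> real" where
  "spectral_radius V E = Max {\<mu>. adj_eigenvalue V E \<mu>}"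

text \<open>H_{n,b} = K_{b-1} join (K_1 union K_{n-b}) on vertices {0..<n}:
  {0..<b-1} is the clique K_{b-1}, vertex b-1 is K_1, {b..<n} is K_{n-b}.\<close>
definition H_edges :: "nat \<Rightarrow> nat \<Rightarrow> nat set set" where
  "H_edges n b = {{u, v} | u v. u < n \<and> v < n \<and> u \<noteq> v \<and>
                     (u < b - 1 \<or> v < b - 1 \<or> (b \<le> u \<and> b \<le> v))}"

definition graph_iso :: "'a set \<Rightarrow> 'a set set \<Rightarrow> 'b set \<Rightarrow> 'b set set \<Rightarrow> bool" where
  "graph_iso V E W F \<longleftrightarrow>
     (\<exists>f. bij_betw f V W \<and> (\<forall>u\<in>V. \<forall>v\<in>V. {u, v} \<in> E \<longleftrightarrow> {f u, f v} \<in> F))"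

definition has_fractional_p_factor :: "'a set \<Rightarrow> 'a set set \<Rightarrow> ('a \<Rightarrow> nat) \<Rightarrow> bool" where
  "has_fractional_p_factor V E p \<longleftrightarrow>
     (\<exists>w :: 'a set \<Rightarrow> real. (\<forall>e\<in>E. 0 \<le> w e \<and> w e \<le> 1) \<and>
        (\<forall>v\<in>V. (\<Sum>e\<in>{e\<in>E. v \<in> e}. w e) = real (p v)))"

definition all_fractional_factors :: "'a set \<Rightarrow> 'a set set \<Rightarrow> nat \<Rightarrow> nat \<Rightarrow> bool" where
  "all_fractional_factors V E a b \<longleftrightarrow>
     (\<forall>p :: 'a \<Rightarrow> nat. (\<forall>v\<in>V. 0 < p v \<and> a \<le> p v \<and> p v \<le> b) \<longrightarrow> has_fractional_p_factor V E p)"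

end

(*
  If G has a vertex of degree less than b, label G so that this vertex becomes the K_1 of
  H_{n,b} and its neighbours lie in the K_{b-1}; then G is a spanning subgraph of a copy of
  H_{n,b}. Comparing an eigenvector of \<rho>(G) with the positive eigenvector of H_{n,b} (whose
  eigenvalue is at most \<rho>(G)) shows that no edge of H_{n,b} can be missing.

  Otherwise G has minimum degree at least b. By LP duality the missing fractional p-factor is
  witnessed by a real vector, which can be reduced to a signed indicator of disjoint sets S, T
  with d_{G-S}(T) < b|T| - a|S|. For n large this forces at least n - 1 non-edges, i.e.
  2|E| \<le> (n-1)(n-2), and Hong's bound \<rho>\<^sup>2 \<le> 2|E| - n + 1 gives \<rho>(G) < n - 2 < \<rho>(H_{n,b}).
*)

theory Submission
  imports Defs "HOL-Analysis.Function_Topology" "HOL-Analysis.Convex" "Jordan_Normal_Form.Char_Poly"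
    "HOL-Computational_Algebra.Fundamental_Theorem_Algebra"
begin

definition neighbours :: "'a set \<Rightarrow> 'a set set \<Rightarrow> 'a \<Rightarrow> 'a set" where
  "neighbours V E x = {u\<in>V. {u, x} \<in> E}"

lemma adj_eigenvalue_iff_neighbours:
  "adj_eigenvalue V E \<mu> \<longleftrightarrow>
    (\<exists>x. (\<exists>v\<in>V. x v \<noteq> 0) \<and> (\<forall>v\<in>V. (\<Sum>u\<in>neighbours V E v. x u) = \<mu> * x v))"
  unfolding adj_eigenvalue_def neighbours_def ..

lemma neighbours_subset: "neighbours V E x \<subseteq> V"
  unfolding neighbours_def by auto

lemma neighbours_sym: "u \<in> V \<Longrightarrow> v \<in> V \<Longrightarrow> u \<in> neighbours V E v \<longleftrightarrow> v \<in> neighbours V E u"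
  unfolding neighbours_def by (auto simp: insert_commute)

lemma simple_graph_finite_edges:
  assumes "simple_graph V E"
  shows "finite E"
  using assms finite_subset[of E "Pow V"] unfolding simple_graph_def by auto

lemma simple_graph_edgeE:
  assumes "simple_graph V E" "e \<in> E"
  obtains u v where "u \<noteq> v" "e = {u, v}" "u \<in> V" "v \<in> V"
  using assms unfolding simple_graph_def by (auto simp: card_2_iff)

lemma self_notin_neighbours:
  assumes "simple_graph V E"
  shows "x \<notin> neighbours V E x"
  using assms unfolding simple_graph_def neighbours_def by fastforce

lemma card_neighbours:
  assumes G: "simple_graph V E" and "x \<in> V"
  shows "card (neighbours V E x) = card {e\<in>E. x \<in> e}"
proof -
  have "bij_betw (\<lambda>u. {u, x}) (neighbours V E x) {e\<in>E. x \<in> e}"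
  proof (rule bij_betwI')
    fix u u' assume "u \<in> neighbours V E x" "u' \<in> neighbours V E x"
    then have "u \<noteq> x" "u' \<noteq> x" using self_notin_neighbours[OF G] by auto
    then show "({u, x} = {u', x}) = (u = u')" by (auto simp: doubleton_eq_iff)
  next
    fix e assume "e \<in> {e\<in>E. x \<in> e}"
    with G obtain u v where "e = {u, v}" "u \<in> V" "v \<in> V" "x \<in> e" "e \<in> E"
      by (auto elim: simple_graph_edgeE)
    then show "\<exists>u\<in>neighbours V E x. e = {u, x}"
      unfolding neighbours_def by (auto simp: insert_commute)
  qed (auto simp: neighbours_def)
  then show ?thesis by (rule bij_betw_same_card)
qed

lemma sum_neighbours_eq:
  assumes "finite V"
  shows "(\<Sum>u\<in>neighbours V E v. f u) = (\<Sum>u\<in>V. if {u, v} \<in> E then f u else 0)"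
  unfolding neighbours_def using sum.inter_filter[OF assms] by simp

lemma sum_neighbours_swap:
  fixes f g :: "'a \<Rightarrow> 'b::comm_semiring_1"
  assumes "finite V"
  shows "(\<Sum>v\<in>V. f v * (\<Sum>u\<in>neighbours V E v. g u)) = (\<Sum>u\<in>V. g u * (\<Sum>v\<in>neighbours V E u. f v))"
proof -
  have "(\<Sum>v\<in>V. f v * (\<Sum>u\<in>neighbours V E v. g u))
      = (\<Sum>v\<in>V. \<Sum>u\<in>V. if {u, v} \<in> E then f v * g u else 0)"
    by (simp add: sum_neighbours_eq[OF assms] sum_distrib_left if_distrib cong: if_cong)
  also have "\<dots> = (\<Sum>u\<in>V. \<Sum>v\<in>V. if {u, v} \<in> E then f v * g u else 0)"
    by (rule sum.swap)
  also have "\<dots> = (\<Sum>u\<in>V. g u * (\<Sum>v\<in>neighbours V E u. f v))"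
    by (simp add: sum_neighbours_eq[OF assms] sum_distrib_left insert_commute if_distrib
        mult.commute cong: if_cong)
  finally show ?thesis .
qed

lemma sum_incidences_swap:
  fixes y :: "'a \<Rightarrow> real" and w :: "'a set \<Rightarrow> real"
  assumes "finite V" "finite E" "\<forall>e\<in>E. e \<subseteq> V"
  shows "(\<Sum>v\<in>V. y v * (\<Sum>e\<in>{e\<in>E. v \<in> e}. w e)) = (\<Sum>e\<in>E. w e * (\<Sum>v\<in>e. y v))"
proof -
  have "(\<Sum>v\<in>V. y v * (\<Sum>e\<in>{e\<in>E. v \<in> e}. w e)) = (\<Sum>v\<in>V. \<Sum>e\<in>E. if v \<in> e then y v * w e else 0)"
    by (simp add: sum_distrib_left sum.inter_filter[OF assms(2), symmetric] if_distrib cong: if_cong)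
  also have "\<dots> = (\<Sum>e\<in>E. \<Sum>v\<in>V. if v \<in> e then y v * w e else 0)"
    by (rule sum.swap)
  also have "\<dots> = (\<Sum>e\<in>E. w e * (\<Sum>v\<in>e. y v))"
  proof (rule sum.cong[OF refl])
    fix e assume "e \<in> E"
    then have "{v\<in>V. v \<in> e} = e" using assms(3) by auto
    then show "(\<Sum>v\<in>V. if v \<in> e then y v * w e else 0) = w e * (\<Sum>v\<in>e. y v)"
      using sum.inter_filter[OF assms(1), of "\<lambda>v. y v * w e" "\<lambda>v. v \<in> e"]
      by (simp add: sum_distrib_left mult.commute)
  qed
  finally show ?thesis .
qed

lemma sum_degrees:
  assumes G: "simple_graph V E"
  shows "(\<Sum>v\<in>V. real (card (neighbours V E v))) = 2 * real (card E)"
proof -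
  have fin: "finite V" "finite E" "\<forall>e\<in>E. e \<subseteq> V" "\<forall>e\<in>E. card e = 2"
    using G simple_graph_finite_edges[OF G] unfolding simple_graph_def by auto
  have "(\<Sum>v\<in>V. real (card (neighbours V E v))) = (\<Sum>v\<in>V. 1 * (\<Sum>e\<in>{e\<in>E. v \<in> e}. 1))"
    by (simp add: card_neighbours[OF G])
  also have "\<dots> = (\<Sum>e\<in>E. 1 * (\<Sum>v\<in>e. 1))"
    by (rule sum_incidences_swap[OF fin(1-3)])
  also have "\<dots> = 2 * real (card E)"
    using fin(4) by simp
  finally show ?thesis .
qed

section \<open>A certificate for the absence of a fractional factor\<close>

definition pos_edge_sum :: "'a set set \<Rightarrow> ('a \<Rightarrow> real) \<Rightarrow> real" where
  "pos_edge_sum E y = (\<Sum>e\<in>E. max 0 (\<Sum>v\<in>e. y v))"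

lemma pos_edge_sum_nonneg: "0 \<le> pos_edge_sum E y"
  unfolding pos_edge_sum_def by (intro sum_nonneg) auto

lemma projection_obtuse_angle:
  fixes p q qs :: "'a \<Rightarrow> real" and K :: "('a \<Rightarrow> real) set"
  assumes segment: "\<And>l. 0 \<le> l \<Longrightarrow> l \<le> 1 \<Longrightarrow> (\<lambda>v. qs v + l * (q v - qs v)) \<in> K"
    and min: "\<And>q'. q' \<in> K \<Longrightarrow> (\<Sum>v\<in>V. (qs v - p v)\<^sup>2) \<le> (\<Sum>v\<in>V. (q' v - p v)\<^sup>2)"
  shows "0 \<le> (\<Sum>v\<in>V. (qs v - p v) * (q v - qs v))"
proof (rule ccontr)
  define c where "c = (\<Sum>v\<in>V. (qs v - p v) * (q v - qs v))"
  define Q where "Q = (\<Sum>v\<in>V. (q v - qs v)\<^sup>2)"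
  assume "\<not> 0 \<le> (\<Sum>v\<in>V. (qs v - p v) * (q v - qs v))"
  then have c: "c < 0" unfolding c_def by simp
  have Q: "0 \<le> Q" unfolding Q_def by (intro sum_nonneg) auto
  define l where "l = min 1 (- c / (Q + 1))"
  have "0 < - c / (Q + 1)" using c Q by (intro divide_pos_pos) auto
  then have l: "0 < l" "l \<le> 1" unfolding l_def by auto
  have "l * Q \<le> (- c / (Q + 1)) * Q" unfolding l_def using Q by (intro mult_right_mono) auto
  also have "\<dots> \<le> - c" using Q c by (simp add: divide_simps)
  finally have lQ: "l * Q \<le> - c" .
  have "(\<Sum>v\<in>V. (qs v + l * (q v - qs v) - p v)\<^sup>2)
      = (\<Sum>v\<in>V. (qs v - p v)\<^sup>2 + 2 * l * ((qs v - p v) * (q v - qs v)) + l\<^sup>2 * (q v - qs v)\<^sup>2)"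
    by (rule sum.cong) (auto simp: power2_eq_square algebra_simps)
  also have "\<dots> = (\<Sum>v\<in>V. (qs v - p v)\<^sup>2) + 2 * l * c + l\<^sup>2 * Q"
    unfolding c_def Q_def by (simp add: sum.distrib sum_distrib_left mult.assoc)
  also have "\<dots> = (\<Sum>v\<in>V. (qs v - p v)\<^sup>2) + l * (2 * c + l * Q)"
    by (simp add: power2_eq_square algebra_simps)
  also have "\<dots> < (\<Sum>v\<in>V. (qs v - p v)\<^sup>2)"
    using l lQ c by (simp add: mult_pos_neg)
  finally show False using min[OF segment[OF less_imp_le[OF l(1)] l(2)]] by simp
qed

lemma exists_nearest_degree_vector:
  fixes p :: "'a \<Rightarrow> real"
  obtains ws :: "'a set \<Rightarrow> real"
  where "\<forall>e. (e \<in> E \<longrightarrow> 0 \<le> ws e \<and> ws e \<le> 1) \<and> (e \<notin> E \<longrightarrow> ws e = 0)"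
    and "\<And>w. \<forall>e. (e \<in> E \<longrightarrow> 0 \<le> w e \<and> w e \<le> 1) \<and> (e \<notin> E \<longrightarrow> w e = 0) \<Longrightarrow>
      (\<Sum>v\<in>V. ((\<Sum>e\<in>{e\<in>E. v \<in> e}. ws e) - p v)\<^sup>2) \<le> (\<Sum>v\<in>V. ((\<Sum>e\<in>{e\<in>E. v \<in> e}. w e) - p v)\<^sup>2)"
proof -
  define B :: "('a set \<Rightarrow> real) set" where "B = PiE UNIV (\<lambda>e. if e \<in> E then {0..1} else {0})"
  have B_iff: "w \<in> B \<longleftrightarrow> (\<forall>e. (e \<in> E \<longrightarrow> 0 \<le> w e \<and> w e \<le> 1) \<and> (e \<notin> E \<longrightarrow> w e = 0))" for w
    unfolding B_def by (auto simp: PiE_iff)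
  have "compactin (product_topology (\<lambda>i. euclidean) UNIV) B"
    unfolding B_def compactin_PiE by auto
  then have "compact B" by (simp add: euclidean_product_topology)
  moreover have "B \<noteq> {}" unfolding B_def by (auto simp: PiE_eq_empty_iff)
  moreover have "continuous_on B (\<lambda>w. \<Sum>v\<in>V. ((\<Sum>e\<in>{e\<in>E. v \<in> e}. w e) - p v)\<^sup>2)"
    by (intro continuous_intros continuous_on_subset[OF continuous_on_product_coordinates]) auto
  ultimately obtain ws where ws: "ws \<in> B"
    and min: "\<forall>w\<in>B. (\<Sum>v\<in>V. ((\<Sum>e\<in>{e\<in>E. v \<in> e}. ws e) - p v)\<^sup>2)
      \<le> (\<Sum>v\<in>V. ((\<Sum>e\<in>{e\<in>E. v \<in> e}. w e) - p v)\<^sup>2)"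
    using continuous_attains_inf by blast
  show ?thesis
  proof (rule that)
    show "\<forall>e. (e \<in> E \<longrightarrow> 0 \<le> ws e \<and> ws e \<le> 1) \<and> (e \<notin> E \<longrightarrow> ws e = 0)"
      using ws unfolding B_iff .
  qed (use min B_iff in blast)
qed

text \<open>Farkas' lemma for the polytope of fractional \<open>p\<close>-factors, proved by projecting \<open>p\<close>
  onto the (compact, convex) set of degree vectors of weightings \<open>E \<rightarrow> [0,1]\<close>.\<close>

lemma no_fractional_factor_certificate:
  fixes p :: "'a \<Rightarrow> real"
  assumes fin: "finite V" "finite E" and sub: "\<forall>e\<in>E. e \<subseteq> V"
    and no_factor: "\<nexists>w. (\<forall>e\<in>E. 0 \<le> w e \<and> w e \<le> 1) \<and> (\<forall>v\<in>V. (\<Sum>e\<in>{e\<in>E. v \<in> e}. w e) = p v)"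
  shows "\<exists>y. pos_edge_sum E y < (\<Sum>v\<in>V. y v * p v)"
proof -
  define deg where "deg w v = (\<Sum>e\<in>{e\<in>E. v \<in> e}. w e)" for w :: "'a set \<Rightarrow> real" and v
  define K where "K = {deg w | w. \<forall>e. (e \<in> E \<longrightarrow> 0 \<le> w e \<and> w e \<le> 1) \<and> (e \<notin> E \<longrightarrow> w e = 0)}"
  obtain ws where ws: "\<forall>e. (e \<in> E \<longrightarrow> 0 \<le> ws e \<and> ws e \<le> 1) \<and> (e \<notin> E \<longrightarrow> ws e = 0)"
    and nearest: "\<And>w. \<forall>e. (e \<in> E \<longrightarrow> 0 \<le> w e \<and> w e \<le> 1) \<and> (e \<notin> E \<longrightarrow> w e = 0) \<Longrightarrow>
      (\<Sum>v\<in>V. (deg ws v - p v)\<^sup>2) \<le> (\<Sum>v\<in>V. (deg w v - p v)\<^sup>2)"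
    unfolding deg_def by (rule exists_nearest_degree_vector[where E = E and V = V and p = p]) blast
  have ws_min: "(\<Sum>v\<in>V. (deg ws v - p v)\<^sup>2) \<le> (\<Sum>v\<in>V. (q v - p v)\<^sup>2)" if "q \<in> K" for q
    using that nearest unfolding K_def by auto
  define y where "y v = p v - deg ws v" for v
  define wp where "wp e = (if e \<in> E \<and> 0 < (\<Sum>v\<in>e. y v) then 1 else (0::real))" for e
  have "0 \<le> (\<Sum>v\<in>V. (deg ws v - p v) * (deg wp v - deg ws v))"
  proof (rule projection_obtuse_angle[OF _ ws_min])
    fix l :: real assume l: "0 \<le> l" "l \<le> 1"
    have "\<forall>e. (e \<in> E \<longrightarrow> 0 \<le> (1 - l) * ws e + l * wp e \<and> (1 - l) * ws e + l * wp e \<le> 1)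
        \<and> (e \<notin> E \<longrightarrow> (1 - l) * ws e + l * wp e = 0)"
      using ws l unfolding wp_def by (auto simp: convex_bound_le)
    moreover have "deg (\<lambda>e. (1 - l) * ws e + l * wp e) = (\<lambda>v. deg ws v + l * (deg wp v - deg ws v))"
      unfolding deg_def by (simp add: sum.distrib sum_subtractf sum_distrib_left algebra_simps)
    ultimately show "(\<lambda>v. deg ws v + l * (deg wp v - deg ws v)) \<in> K"
      unfolding K_def by (intro CollectI exI[of _ "\<lambda>e. (1 - l) * ws e + l * wp e"]) simp
  qed
  then have "(\<Sum>v\<in>V. y v * deg wp v) \<le> (\<Sum>v\<in>V. y v * deg ws v)"
    unfolding y_def by (simp add: algebra_simps sum_subtractf sum.distrib)
  moreover have "(\<Sum>v\<in>V. y v * deg wp v) = pos_edge_sum E y"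
    unfolding deg_def sum_incidences_swap[OF fin sub] pos_edge_sum_def
    by (rule sum.cong) (auto simp: wp_def)
  moreover have "\<exists>v\<in>V. y v \<noteq> 0"
  proof (rule ccontr)
    assume "\<not> (\<exists>v\<in>V. y v \<noteq> 0)"
    then have "\<forall>v\<in>V. deg ws v = p v" unfolding y_def by auto
    with ws no_factor show False unfolding deg_def by blast
  qed
  then obtain v0 where "v0 \<in> V" "y v0 \<noteq> 0" by blast
  then have "0 < (\<Sum>v\<in>V. (y v)\<^sup>2)" using fin(1) by (intro sum_pos2[of _ v0]) auto
  moreover have "(\<Sum>v\<in>V. (y v)\<^sup>2) = (\<Sum>v\<in>V. y v * p v) - (\<Sum>v\<in>V. y v * deg ws v)"
    unfolding sum_subtractf[symmetric] by (rule sum.cong) (auto simp: y_def power2_eq_square algebra_simps)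
  ultimately show ?thesis by (intro exI[of _ y]) linarith
qed

definition box_support :: "'a set \<Rightarrow> real \<Rightarrow> real \<Rightarrow> ('a \<Rightarrow> real) \<Rightarrow> real" where
  "box_support V \<alpha> \<beta> y = (\<Sum>v\<in>V. if 0 < y v then \<beta> * y v else \<alpha> * y v)"

definition signed_indicator :: "'a set \<Rightarrow> 'a set \<Rightarrow> 'a \<Rightarrow> real" where
  "signed_indicator S T v = (if v \<in> T then 1 else if v \<in> S then -1 else 0)"

lemma weighted_sum_le_box_support:
  assumes "\<forall>v\<in>V. \<alpha> \<le> p v \<and> p v \<le> \<beta>"
  shows "(\<Sum>v\<in>V. y v * p v) \<le> box_support V \<alpha> \<beta> y"
  unfolding box_support_def
proof (rule sum_mono)
  fix v assume "v \<in> V"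
  then show "y v * p v \<le> (if 0 < y v then \<beta> * y v else \<alpha> * y v)"
    using assms mult_left_mono[of "p v" \<beta> "y v"] mult_left_mono_neg[of \<alpha> "p v" "y v"]
    by (auto simp: mult.commute)
qed

lemma max_sum_sgn_peel:
  fixes m y1 y2 :: real
  assumes "0 < m" "y1 = 0 \<or> m \<le> \<bar>y1\<bar>" "y2 = 0 \<or> m \<le> \<bar>y2\<bar>"
  shows "max 0 (y1 + y2) = m * max 0 (sgn y1 + sgn y2) + max 0 ((y1 - m * sgn y1) + (y2 - m * sgn y2))"
  using assms by (cases y1 "0::real" rule: linorder_cases; cases y2 "0::real" rule: linorder_cases) (auto simp: max_def)

lemma box_term_sgn_peel:
  fixes m z \<alpha> \<beta> :: real
  assumes "0 < m" "z = 0 \<or> m \<le> \<bar>z\<bar>"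
  shows "(if 0 < z then \<beta> * z else \<alpha> * z) = m * (if 0 < sgn z then \<beta> * sgn z else \<alpha> * sgn z)
          + (if 0 < z - m * sgn z then \<beta> * (z - m * sgn z) else \<alpha> * (z - m * sgn z))"
  using assms by (cases z "0::real" rule: linorder_cases) (auto simp: algebra_simps)

lemma pos_edge_sum_peel:
  assumes G: "simple_graph V E" and m: "0 < m" and gap: "\<forall>v\<in>V. y v = 0 \<or> m \<le> \<bar>y v\<bar>"
  shows "pos_edge_sum E y = m * pos_edge_sum E (\<lambda>v. sgn (y v)) + pos_edge_sum E (\<lambda>v. y v - m * sgn (y v))"
proof -
  have "max 0 (\<Sum>v\<in>e. y v)
      = m * max 0 (\<Sum>v\<in>e. sgn (y v)) + max 0 (\<Sum>v\<in>e. y v - m * sgn (y v))" if "e \<in> E" for e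
  proof -
    from G that obtain u w where "u \<noteq> w" "e = {u, w}" "u \<in> V" "w \<in> V"
      by (rule simple_graph_edgeE)
    then show ?thesis using max_sum_sgn_peel[OF m] gap by auto
  qed
  then show ?thesis unfolding pos_edge_sum_def by (simp add: sum.distrib sum_distrib_left)
qed

lemma box_support_peel:
  assumes m: "0 < m" and gap: "\<forall>v\<in>V. y v = 0 \<or> m \<le> \<bar>y v\<bar>"
  shows "box_support V \<alpha> \<beta> y
    = m * box_support V \<alpha> \<beta> (\<lambda>v. sgn (y v)) + box_support V \<alpha> \<beta> (\<lambda>v. y v - m * sgn (y v))"
  using box_term_sgn_peel[OF m] gap unfolding box_support_def
  by (simp add: sum.distrib sum_distrib_left)

lemma box_support_sgn:
  assumes "finite V"
  shows "box_support V \<alpha> \<beta> (\<lambda>v. sgn (y v)) = \<beta> * card {v\<in>V. 0 < y v} - \<alpha> * card {v\<in>V. y v < 0}"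
proof -
  have "box_support V \<alpha> \<beta> (\<lambda>v. sgn (y v)) = (\<Sum>v\<in>V. (if 0 < y v then \<beta> else 0) - (if y v < 0 then \<alpha> else 0))"
    unfolding box_support_def by (intro sum.cong) (auto simp: sgn_if)
  then show ?thesis
    by (simp add: sum_subtractf sum.If_cases[OF assms] Int_def conj_commute)
qed

lemma pos_edge_sum_sgn:
  assumes G: "simple_graph V E"
  shows "pos_edge_sum E (\<lambda>v. sgn (y v)) = pos_edge_sum E (signed_indicator {v\<in>V. y v < 0} {v\<in>V. 0 < y v})"
  unfolding pos_edge_sum_def
proof (rule sum.cong[OF refl])
  fix e assume "e \<in> E"
  then have "e \<subseteq> V" using G unfolding simple_graph_def by auto
  then have "(\<Sum>v\<in>e. sgn (y v)) = (\<Sum>v\<in>e. signed_indicator {v\<in>V. y v < 0} {v\<in>V. 0 < y v} v)"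
    by (intro sum.cong) (auto simp: signed_indicator_def sgn_if)
  then show "max 0 (\<Sum>v\<in>e. sgn (y v))
      = max 0 (\<Sum>v\<in>e. signed_indicator {v\<in>V. y v < 0} {v\<in>V. 0 < y v} v)"
    by simp
qed

lemma exists_min_nonzero_level:
  fixes y :: "'a \<Rightarrow> real"
  assumes "finite V" "{v\<in>V. y v \<noteq> 0} \<noteq> {}"
  obtains v0 where "v0 \<in> V" "y v0 \<noteq> 0" "\<forall>v\<in>V. y v = 0 \<or> \<bar>y v0\<bar> \<le> \<bar>y v\<bar>"
proof -
  define Z where "Z = {v\<in>V. y v \<noteq> 0}"
  have "finite Z" using assms(1) unfolding Z_def by simp
  then have "Min ((\<lambda>v. \<bar>y v\<bar>) ` Z) \<in> (\<lambda>v. \<bar>y v\<bar>) ` Z" using assms(2) unfolding Z_def by (intro Min_in) auto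
  then obtain v0 where v0: "v0 \<in> Z" "\<bar>y v0\<bar> = Min ((\<lambda>v. \<bar>y v\<bar>) ` Z)" by auto
  have "\<bar>y v0\<bar> \<le> \<bar>y v\<bar>" if "v \<in> V" "y v \<noteq> 0" for v
    unfolding v0(2) using \<open>finite Z\<close> that by (intro Min_le) (auto simp: Z_def)
  then show ?thesis using that v0(1) unfolding Z_def by blast
qed

text \<open>Peeling off the smallest nonzero level \<open>m\<close> of \<open>\<bar>y\<bar>\<close> splits both sides linearly into the
  sign vector of \<open>y\<close> and a vector with fewer nonzero entries; one of the two parts keeps the strict
  inequality.\<close>

lemma signed_indicator_certificate:
  assumes G: "simple_graph V E"
  shows "pos_edge_sum E y < box_support V \<alpha> \<beta> y \<Longrightarrow>
    \<exists>S T. S \<subseteq> V \<and> T \<subseteq> V \<and> S \<inter> T = {} \<and>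
      pos_edge_sum E (signed_indicator S T) < \<beta> * card T - \<alpha> * card S"
proof (induction "card {v\<in>V. y v \<noteq> 0}" arbitrary: y rule: less_induct)
  case less
  have fin: "finite V" using G unfolding simple_graph_def by simp
  show ?case
  proof (cases "{v\<in>V. y v \<noteq> 0} = {}")
    case True
    then have "box_support V \<alpha> \<beta> y = 0" unfolding box_support_def by simp
    then show ?thesis using less.prems pos_edge_sum_nonneg[of E y] by simp
  next
    case False
    obtain v0 where v0: "v0 \<in> V" "y v0 \<noteq> 0" and gap: "\<forall>v\<in>V. y v = 0 \<or> \<bar>y v0\<bar> \<le> \<bar>y v\<bar>"
      by (rule exists_min_nonzero_level[OF fin False])
    define m where "m = \<bar>y v0\<bar>"
    have m: "0 < m" using v0 unfolding m_def by simp
    note gap = gap[folded m_def]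
    define y' where "y' = (\<lambda>v. y v - m * sgn (y v))"
    show ?thesis
    proof (cases "pos_edge_sum E (\<lambda>v. sgn (y v)) < box_support V \<alpha> \<beta> (\<lambda>v. sgn (y v))")
      case True
      then show ?thesis
        unfolding pos_edge_sum_sgn[OF G] box_support_sgn[OF fin]
        by (intro exI[of _ "{v\<in>V. y v < 0}"] exI[of _ "{v\<in>V. 0 < y v}"]) auto
    next
      case False
      then have "m * box_support V \<alpha> \<beta> (\<lambda>v. sgn (y v)) \<le> m * pos_edge_sum E (\<lambda>v. sgn (y v))"
        using m by (intro mult_left_mono) auto
      then have "pos_edge_sum E y' < box_support V \<alpha> \<beta> y'"
        using less.prems unfolding y'_def pos_edge_sum_peel[OF G m gap] box_support_peel[OF m gap]
        by linarith
      moreover have "card {v\<in>V. y' v \<noteq> 0} < card {v\<in>V. y v \<noteq> 0}"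
      proof (rule psubset_card_mono)
        show "finite {v\<in>V. y v \<noteq> 0}" using fin by simp
        have "y' v0 = 0" using v0 unfolding y'_def m_def by (auto simp: sgn_if)
        then show "{v\<in>V. y' v \<noteq> 0} \<subset> {v\<in>V. y v \<noteq> 0}"
          using v0 unfolding y'_def by auto
      qed
      ultimately show ?thesis using less.hyps by blast
    qed
  qed
qed

lemma deficient_pair_if_no_fractional_factor:
  assumes G: "simple_graph V E" and p: "\<forall>v\<in>V. a \<le> p v \<and> p v \<le> b"
    and no_factor: "\<not> has_fractional_p_factor V E p"
  shows "\<exists>S T. S \<subseteq> V \<and> T \<subseteq> V \<and> S \<inter> T = {} \<and>
    pos_edge_sum E (signed_indicator S T) < real b * card T - real a * card S"
proof -
  have "finite V" "\<forall>e\<in>E. e \<subseteq> V" using G unfolding simple_graph_def by auto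
  then obtain y where "pos_edge_sum E y < (\<Sum>v\<in>V. y v * real (p v))"
    using no_fractional_factor_certificate[of V E "\<lambda>v. real (p v)"] no_factor
      simple_graph_finite_edges[OF G] unfolding has_fractional_p_factor_def by blast
  also have "\<dots> \<le> box_support V (real a) (real b) y"
    using p by (intro weighted_sum_le_box_support) auto
  finally show ?thesis by (rule signed_indicator_certificate[OF G])
qed

lemma pos_edge_sum_signed_indicator_edges:
  assumes G: "simple_graph V E" and ST: "S \<inter> T = {}"
  shows "pos_edge_sum E (signed_indicator S T) = (\<Sum>e\<in>{e\<in>E. e \<inter> S = {}}. real (card (e \<inter> T)))"
proof -
  have "max 0 (\<Sum>v\<in>e. signed_indicator S T v) = (if e \<inter> S = {} then real (card (e \<inter> T)) else 0)"
    if "e \<in> E" for e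
  proof -
    from G that obtain u w where "u \<noteq> w" "e = {u, w}" by (rule simple_graph_edgeE)
    then show ?thesis using ST
      by (cases "u \<in> S"; cases "u \<in> T"; cases "w \<in> S"; cases "w \<in> T")
        (auto simp: signed_indicator_def card_insert_if)
  qed
  then have "pos_edge_sum E (signed_indicator S T)
      = (\<Sum>e\<in>E. if e \<inter> S = {} then real (card (e \<inter> T)) else 0)"
    unfolding pos_edge_sum_def by (intro sum.cong) auto
  then show ?thesis by (simp add: sum.inter_filter[OF simple_graph_finite_edges[OF G]])
qed

lemma pos_edge_sum_signed_indicator_degrees:
  assumes G: "simple_graph V E" and ST: "S \<inter> T = {}" "T \<subseteq> V"
  shows "pos_edge_sum E (signed_indicator S T) = (\<Sum>x\<in>T. real (card (neighbours V E x - S)))"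
proof -
  define E' where "E' = {e\<in>E. e \<inter> S = {}}"
  have G': "simple_graph (V - S) E'"
    using G unfolding simple_graph_def E'_def by auto
  have nbrs: "neighbours (V - S) E' x = neighbours V E x - S" if "x \<notin> S" for x
    using that unfolding neighbours_def E'_def by auto
  have fin_edge: "finite e" if "e \<in> E" for e
    using G that unfolding simple_graph_def by (auto intro: card_ge_0_finite)
  have "pos_edge_sum E (signed_indicator S T) = (\<Sum>e\<in>E'. 1 * (\<Sum>v\<in>e. of_bool (v \<in> T)))"
    unfolding pos_edge_sum_signed_indicator_edges[OF G ST(1)] E'_def
    by (intro sum.cong refl) (auto simp: fin_edge)
  also have "\<dots> = (\<Sum>v\<in>V - S. of_bool (v \<in> T) * (\<Sum>e\<in>{e\<in>E'. v \<in> e}. 1))"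
    using G' simple_graph_finite_edges[OF G'] unfolding simple_graph_def
    by (intro sum_incidences_swap[symmetric]) auto
  also have "\<dots> = (\<Sum>x\<in>T. real (card {e\<in>E'. x \<in> e}))"
  proof -
    have "{v \<in> V - S. v \<in> T} = T" using ST by auto
    moreover have "finite (V - S)" using G unfolding simple_graph_def by simp
    ultimately show ?thesis
      using sum.inter_filter[of "V - S" "\<lambda>v. real (card {e\<in>E'. v \<in> e})" "\<lambda>v. v \<in> T"]
      by (auto simp: of_bool_def intro!: sum.cong)
  qed
  also have "\<dots> = (\<Sum>x\<in>T. real (card (neighbours V E x - S)))"
  proof (rule sum.cong[OF refl])
    fix x assume "x \<in> T"
    then have "x \<in> V - S" using ST by auto
    then show "real (card {e\<in>E'. x \<in> e}) = real (card (neighbours V E x - S))"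
      by (simp add: card_neighbours[OF G', symmetric] nbrs)
  qed
  finally show ?thesis .
qed

lemma real_choose_two: "real (m choose 2) = real m * (real m - 1) / 2"
  by (cases m) (auto simp: choose_two field_char_0_class.of_nat_div mod_eq_0_iff_dvd algebra_simps)

lemma card_two_subsets_meeting:
  assumes "finite X" "T \<subseteq> X"
  shows "2 * real (card {e. e \<subseteq> X \<and> card e = 2 \<and> e \<inter> T \<noteq> {}})
    = real (card T) * (real (card T) - 1) + 2 * real (card T) * (real (card X) - real (card T))"
proof -
  define P2 where "P2 Y = {e. e \<subseteq> Y \<and> card e = 2}" for Y :: "'a set"
  have fin: "finite (P2 X)" using assms(1) unfolding P2_def by (auto intro: finite_subset[of _ "Pow X"])
  have sub: "P2 (X - T) \<subseteq> P2 X" unfolding P2_def by auto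
  have "{e. e \<subseteq> X \<and> card e = 2 \<and> e \<inter> T \<noteq> {}} = P2 X - P2 (X - T)"
    unfolding P2_def by auto
  then have "real (card {e. e \<subseteq> X \<and> card e = 2 \<and> e \<inter> T \<noteq> {}}) = real (card (P2 X)) - real (card (P2 (X - T)))"
    using card_Diff_subset[OF finite_subset[OF sub fin] sub] card_mono[OF fin sub] by (simp add: of_nat_diff)
  moreover have "card (P2 Y) = card Y choose 2" if "finite Y" for Y
    unfolding P2_def by (rule n_subsets[OF that])
  moreover have "real (card (X - T)) = real (card X) - real (card T)"
    using assms by (simp add: card_Diff_subset finite_subset of_nat_diff card_mono)
  ultimately have "real (card {e. e \<subseteq> X \<and> card e = 2 \<and> e \<inter> T \<noteq> {}})
      = real (card X) * (real (card X) - 1) / 2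
        - (real (card X) - real (card T)) * (real (card X) - real (card T) - 1) / 2"
    using assms(1) by (simp add: real_choose_two)
  then show ?thesis by (simp add: field_simps)
qed

lemma deficient_pair_arith:
  fixes a b n s t :: real
  assumes a: "1 \<le> a" and ab: "a + 1 \<le> b" and n: "3 * b * (b + a + 1) + 7 * a \<le> a * n"
    and s: "0 \<le> s" and t: "a + 1 \<le> t" and st: "s + t \<le> n" and ast: "a * s + 1 \<le> b * t"
  shows "2 * (n - 1) \<le> t * (t - 1) + 2 * t * (n - s - t) - 2 * (b * t - a * s - 1)"
proof -
  define r where "r = n - s - t"
  have r: "0 \<le> r" using st unfolding r_def by simp
  have "0 \<le> 2 * r * (t - 1) + t * (t - (2 * b + 3)) + 2 * (a - 1) * s + 4"
  proof (cases "2 * b + 3 \<le> t")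
    case True
    then show ?thesis using r t a s by (intro add_nonneg_nonneg mult_nonneg_nonneg) auto
  next
    case False
    then have "b * t \<le> b * (2 * b + 3)" "a * t \<le> a * (2 * b + 3)"
      using a ab by (intro mult_left_mono; simp)+
    then have "b * b + a * b + 4 * a + 1 \<le> a * r"
      using n ast unfolding r_def by (simp add: algebra_simps)
    also have "\<dots> \<le> r * (t - 1)" using mult_left_mono[of a "t - 1" r] r t by (simp add: mult.commute)
    finally have "b * b + a * b + 4 * a + 1 \<le> r * (t - 1)" .
    moreover have "0 \<le> (2 * t - (2 * b + 3))\<^sup>2" by simp
    moreover have "s \<le> a * s" "b \<le> a * b" "b \<le> b * b"
      using a ab s by (simp_all add: mult_right_mono[of 1 _ s, simplified]
          mult_right_mono[of 1 _ b, simplified])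
    ultimately show ?thesis using a by (simp add: power2_eq_square algebra_simps)
  qed
  then show ?thesis unfolding r_def by (simp add: algebra_simps)
qed

lemma card_edges_avoiding_meeting_le:
  assumes G: "simple_graph V E" and ST: "S \<inter> T = {}"
  shows "real (card {e\<in>E. e \<inter> S = {} \<and> e \<inter> T \<noteq> {}}) \<le> pos_edge_sum E (signed_indicator S T)"
proof -
  have "real (card {e\<in>E. e \<inter> S = {} \<and> e \<inter> T \<noteq> {}}) = (\<Sum>e\<in>{e\<in>E. e \<inter> S = {} \<and> e \<inter> T \<noteq> {}}. 1)"
    by simp
  also have "\<dots> \<le> (\<Sum>e\<in>{e\<in>E. e \<inter> S = {} \<and> e \<inter> T \<noteq> {}}. real (card (e \<inter> T)))"
  proof (rule sum_mono)
    fix e assume "e \<in> {e\<in>E. e \<inter> S = {} \<and> e \<inter> T \<noteq> {}}"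
    then have "finite e" "e \<inter> T \<noteq> {}"
      using G unfolding simple_graph_def by (auto intro: card_ge_0_finite)
    then show "1 \<le> real (card (e \<inter> T))" by (simp add: Suc_le_eq card_gt_0_iff)
  qed
  also have "\<dots> \<le> (\<Sum>e\<in>{e\<in>E. e \<inter> S = {}}. real (card (e \<inter> T)))"
    using simple_graph_finite_edges[OF G] by (intro sum_mono2) auto
  finally show ?thesis unfolding pos_edge_sum_signed_indicator_edges[OF G ST] .
qed

lemma deficient_pair_sizes:
  fixes a b :: nat
  assumes G: "simple_graph V E" and ST: "S \<subseteq> V" "T \<subseteq> V" "S \<inter> T = {}"
    and deg: "\<forall>x\<in>T. b \<le> card (neighbours V E x)"
    and deficient: "pos_edge_sum E (signed_indicator S T) < real b * card T - real a * card S"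
  shows "a + 1 \<le> card T" and "a * card S + 1 \<le> b * card T"
proof -
  have fin: "finite V" using G unfolding simple_graph_def by simp
  have "real b - real (card S) \<le> real (card (neighbours V E x - S))" if "x \<in> T" for x
  proof -
    have "card (neighbours V E x) \<le> card ((neighbours V E x - S) \<union> S)"
      using fin ST(1) neighbours_subset[of V E x] by (intro card_mono) (auto intro: finite_subset)
    also have "\<dots> \<le> card (neighbours V E x - S) + card S" by (rule card_Un_le)
    finally have "b \<le> card (neighbours V E x - S) + card S" using deg that by fastforce
    then show ?thesis by (simp add: le_diff_eq flip: of_nat_add)
  qed
  then have "real (card T) * (real b - real (card S)) \<le> pos_edge_sum E (signed_indicator S T)"
    unfolding pos_edge_sum_signed_indicator_degrees[OF G ST(3,2)]
    using sum_mono[of T "\<lambda>_. real b - real (card S)"] by simp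
  then have "real a * real (card S) < real (card T) * real (card S)"
    using deficient by (simp add: algebra_simps)
  then have "a * card S < card T * card S" by (metis of_nat_less_iff of_nat_mult)
  then show "a + 1 \<le> card T" by (cases "card S = 0") auto
  have "real (a * card S) < real (b * card T)"
    using deficient pos_edge_sum_nonneg[of E "signed_indicator S T"] by simp
  then show "a * card S + 1 \<le> b * card T"
    by (simp only: of_nat_less_iff Suc_eq_plus1 [symmetric] Suc_le_eq)
qed

lemma card_edges_add_card_le:
  assumes G: "simple_graph V E" and Q: "Q \<subseteq> {e. e \<subseteq> V \<and> card e = 2}"
  shows "real (card E) + real (card Q) \<le> real (card V choose 2) + real (card (E \<inter> Q))"
proof -
  define P2 where "P2 = {e. e \<subseteq> V \<and> card e = 2}"
  have fin: "finite V" using G unfolding simple_graph_def by simp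
  have finP2: "finite P2" using fin unfolding P2_def by (auto intro: finite_subset[of _ "Pow V"])
  have "card E \<le> card ((P2 - Q) \<union> (E \<inter> Q))"
    using G finP2 simple_graph_finite_edges[OF G] unfolding simple_graph_def P2_def
    by (intro card_mono) auto
  also have "\<dots> \<le> card (P2 - Q) + card (E \<inter> Q)" by (rule card_Un_le)
  finally show ?thesis
    using card_Diff_subset[OF finite_subset[OF Q finP2[unfolded P2_def]] Q]
      card_mono[OF finP2[unfolded P2_def] Q] n_subsets[OF fin, of 2]
    unfolding P2_def by (simp add: of_nat_diff)
qed

lemma card_edges_le_if_deficient:
  fixes a b n :: nat
  assumes G: "simple_graph V E" and V: "card V = n"
    and ST: "S \<subseteq> V" "T \<subseteq> V" "S \<inter> T = {}"
    and deg: "\<forall>x\<in>T. b \<le> card (neighbours V E x)"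
    and deficient: "pos_edge_sum E (signed_indicator S T) < real b * card T - real a * card S"
    and a: "1 \<le> a" "a < b" and n: "3 * real b * (real b + real a + 1) + 7 * real a \<le> real a * real n"
  shows "2 * real (card E) \<le> (real n - 1) * (real n - 2)"
proof -
  have fin: "finite V" using G unfolding simple_graph_def by simp
  define s where "s = card S"
  define t where "t = card T"
  define Q where "Q = {e. e \<subseteq> V - S \<and> card e = 2 \<and> e \<inter> T \<noteq> {}}"
  note st = deficient_pair_sizes[OF G ST deg deficient, folded s_def t_def]
  have "E \<inter> Q = {e\<in>E. e \<inter> S = {} \<and> e \<inter> T \<noteq> {}}"
    using G unfolding Q_def simple_graph_def by auto
  then have "real (card (E \<inter> Q)) < real b * real t - real a * real s"
    using card_edges_avoiding_meeting_le[OF G ST(3)] deficient unfolding s_def t_def by simp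
  then have "card (E \<inter> Q) + a * s < b * t"
    by (metis less_diff_eq of_nat_add of_nat_less_iff of_nat_mult)
  then have "real (card (E \<inter> Q) + a * s + 1) \<le> real (b * t)" by (simp only: of_nat_le_iff)
  then have "real (card (E \<inter> Q)) \<le> real b * real t - real a * real s - 1" by simp
  moreover have "real (card E) + real (card Q) \<le> real (n choose 2) + real (card (E \<inter> Q))"
    using card_edges_add_card_le[OF G, of Q] V unfolding Q_def by auto
  moreover have "2 * real (card Q) = real t * (real t - 1) + 2 * real t * (real n - real s - real t)"
  proof -
    have "T \<subseteq> V - S" "card (V - S) = n - s" "s \<le> n"
      using ST V fin card_mono[OF fin ST(1)] unfolding s_def by (auto simp: card_Diff_subset finite_subset)
    then show ?thesis
      using card_two_subsets_meeting[of "V - S" T] fin unfolding Q_def t_def by (simp add: of_nat_diff)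
  qed
  moreover have "2 * (real n - 1) \<le> real t * (real t - 1) + 2 * real t * (real n - real s - real t)
      - 2 * (real b * real t - real a * real s - 1)"
  proof (rule deficient_pair_arith)
    show "real a * real s + 1 \<le> real b * real t" using st(2) by (simp flip: of_nat_mult)
    have "card (S \<union> T) \<le> n" using fin ST V card_mono[of V "S \<union> T"] by auto
    then show "real s + real t \<le> real n"
      using ST fin by (simp add: s_def t_def card_Un_disjoint finite_subset flip: of_nat_add)
  qed (use a n st(1) in auto)
  ultimately show ?thesis using real_choose_two[of n] by (simp add: algebra_simps; linarith)
qed

lemma card_edges_le_if_not_all_fractional_factors:
  fixes a b n :: nat
  assumes G: "simple_graph V E" and V: "card V = n"
    and deg: "\<forall>v\<in>V. b \<le> card (neighbours V E v)"
    and a: "1 \<le> a" "a < b" and n: "3 * real b * (real b + real a + 1) + 7 * real a \<le> real a * real n"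
    and no_factors: "\<not> all_fractional_factors V E a b"
  shows "2 * real (card E) \<le> (real n - 1) * (real n - 2)"
proof -
  obtain p where p: "\<forall>v\<in>V. a \<le> p v \<and> p v \<le> b" and no_factor: "\<not> has_fractional_p_factor V E p"
    using no_factors unfolding all_fractional_factors_def by blast
  obtain S T where ST: "S \<subseteq> V" "T \<subseteq> V" "S \<inter> T = {}"
      and deficient: "pos_edge_sum E (signed_indicator S T) < real b * card T - real a * card S"
    using deficient_pair_if_no_fractional_factor[OF G p no_factor] by blast
  have "\<forall>x\<in>T. b \<le> card (neighbours V E x)" using deg ST by blast
  then show ?thesis by (rule card_edges_le_if_deficient[OF G V ST _ deficient a n])
qed

section \<open>Hong's bound on the spectral radius\<close>

lemma sum_neighbour_degrees_le:
  assumes G: "simple_graph V E" and V: "card V = n"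
    and no_isolated: "\<forall>v\<in>V. 1 \<le> card (neighbours V E v)" and "u \<in> V"
  shows "(\<Sum>v\<in>neighbours V E u. real (card (neighbours V E v))) \<le> 2 * real (card E) - real n + 1"
proof -
  define d where "d v = real (card (neighbours V E v))" for v
  define N where "N = neighbours V E u"
  have fin: "finite V" using G unfolding simple_graph_def by simp
  have N: "N \<subseteq> V" "u \<in> V - N" "finite N"
    using neighbours_subset[of V E u] self_notin_neighbours[OF G, of u] \<open>u \<in> V\<close>
      finite_subset[OF neighbours_subset fin] unfolding N_def by auto
  have "(\<Sum>v\<in>V. d v) = (\<Sum>v\<in>N. d v) + (\<Sum>v\<in>V - N. d v)"
    by (simp add: sum.subset_diff[OF N(1) fin])
  also have "(\<Sum>v\<in>V - N. d v) = d u + (\<Sum>v\<in>V - N - {u}. d v)"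
    using sum.remove[of "V - N" u d] fin N(2) by simp
  finally have split: "(\<Sum>v\<in>V. d v) = (\<Sum>v\<in>N. d v) + d u + (\<Sum>v\<in>V - N - {u}. d v)" by simp
  have "real (card (V - N - {u})) \<le> (\<Sum>v\<in>V - N - {u}. d v)"
    using no_isolated sum_mono[of "V - N - {u}" "\<lambda>_. 1::real" d] unfolding d_def by simp
  moreover have "card (V - N - {u}) = n - card N - 1"
    using card_Diff_subset[OF N(3,1)] N(2) V by (simp add: card_Diff_singleton)
  moreover have "card (insert u N) \<le> n" using card_mono[OF fin, of "insert u N"] N V by simp
  ultimately have "real (n - card N - 1) \<le> 2 * real (card E) - (\<Sum>v\<in>N. d v) - real (card N)"
    using split sum_degrees[OF G] unfolding d_def N_def by simp
  moreover have "real (n - card N - 1) = real n - real (card N) - 1"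
    using \<open>card (insert u N) \<le> n\<close> N by (simp add: of_nat_diff)
  ultimately show ?thesis unfolding d_def N_def by simp
qed

lemma adj_eigenvalue_sq_le:
  assumes G: "simple_graph V E" and V: "card V = n"
    and no_isolated: "\<forall>v\<in>V. 1 \<le> card (neighbours V E v)" and \<mu>: "adj_eigenvalue V E \<mu>"
  shows "\<mu>\<^sup>2 \<le> 2 * real (card E) - real n + 1"
proof -
  have fin: "finite V" using G unfolding simple_graph_def by simp
  obtain x where "\<exists>v\<in>V. x v \<noteq> 0" and eq: "\<forall>v\<in>V. (\<Sum>u\<in>neighbours V E v. x u) = \<mu> * x v"
    using \<mu> unfolding adj_eigenvalue_iff_neighbours by blast
  then have X: "0 < (\<Sum>v\<in>V. (x v)\<^sup>2)" using fin by (auto intro: sum_pos2)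
  define d where "d v = real (card (neighbours V E v))" for v
  have "(\<mu> * x v)\<^sup>2 \<le> d v * (\<Sum>u\<in>neighbours V E v. (x u)\<^sup>2)" if "v \<in> V" for v
  proof -
    have "(\<mu> * x v)\<^sup>2 = (\<Sum>u\<in>neighbours V E v. 1 * x u)\<^sup>2" using eq that by simp
    also have "\<dots> \<le> (\<Sum>u\<in>neighbours V E v. 1\<^sup>2) * (\<Sum>u\<in>neighbours V E v. (x u)\<^sup>2)"
      by (rule Cauchy_Schwarz_ineq_sum)
    finally show ?thesis unfolding d_def by simp
  qed
  then have "\<mu>\<^sup>2 * (\<Sum>v\<in>V. (x v)\<^sup>2) \<le> (\<Sum>v\<in>V. d v * (\<Sum>u\<in>neighbours V E v. (x u)\<^sup>2))"
    by (simp add: sum_distrib_left power_mult_distrib sum_mono)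
  also have "\<dots> = (\<Sum>u\<in>V. (x u)\<^sup>2 * (\<Sum>v\<in>neighbours V E u. d v))"
    by (rule sum_neighbours_swap[OF fin])
  also have "\<dots> \<le> (\<Sum>u\<in>V. (x u)\<^sup>2 * (2 * real (card E) - real n + 1))"
    using sum_neighbour_degrees_le[OF G V no_isolated] unfolding d_def
    by (intro sum_mono mult_left_mono) auto
  also have "\<dots> = (2 * real (card E) - real n + 1) * (\<Sum>v\<in>V. (x v)\<^sup>2)"
    by (simp add: sum_distrib_right mult.commute)
  finally show ?thesis using X by simp
qed

lemma eigenvalue_mat_iff:
  fixes c :: "nat \<Rightarrow> nat \<Rightarrow> 'a::field"
  shows "eigenvalue (mat n n (\<lambda>(i, j). c i j)) r \<longleftrightarrow>
    (\<exists>x. (\<exists>i<n. x i \<noteq> 0) \<and> (\<forall>i<n. (\<Sum>j=0..<n. c i j * x j) = r * x i))"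
proof
  assume "eigenvalue (mat n n (\<lambda>(i, j). c i j)) r"
  then obtain v where v: "v \<in> carrier_vec n" "v \<noteq> 0\<^sub>v n" "mat n n (\<lambda>(i, j). c i j) *\<^sub>v v = r \<cdot>\<^sub>v v"
    unfolding eigenvalue_def eigenvector_def by auto
  have "\<exists>i<n. v $ i \<noteq> 0" using v(1,2) by (auto intro: eq_vecI)
  moreover have "(\<Sum>j=0..<n. c i j * v $ j) = r * v $ i" if "i < n" for i
    using arg_cong[OF v(3), of "\<lambda>w. w $ i"] v(1) that by (simp add: scalar_prod_def)
  ultimately show "\<exists>x. (\<exists>i<n. x i \<noteq> 0) \<and> (\<forall>i<n. (\<Sum>j=0..<n. c i j * x j) = r * x i)" by blast
next
  assume "\<exists>x. (\<exists>i<n. x i \<noteq> 0) \<and> (\<forall>i<n. (\<Sum>j=0..<n. c i j * x j) = r * x i)"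
  then obtain x i where "i < n" "x i \<noteq> 0" "\<forall>i<n. (\<Sum>j=0..<n. c i j * x j) = r * x i" by blast
  moreover have "vec n x \<noteq> 0\<^sub>v n"
  proof
    assume "vec n x = 0\<^sub>v n"
    then have "vec n x $ i = 0\<^sub>v n $ i" by simp
    then show False using \<open>i < n\<close> \<open>x i \<noteq> 0\<close> by simp
  qed
  ultimately have "eigenvector (mat n n (\<lambda>(i, j). c i j)) (vec n x) r"
    unfolding eigenvector_def by (auto simp: scalar_prod_def intro!: eq_vecI)
  then show "eigenvalue (mat n n (\<lambda>(i, j). c i j)) r" unfolding eigenvalue_def by blast
qed

lemma finite_indexed_eigenvalues:
  fixes c :: "nat \<Rightarrow> nat \<Rightarrow> 'a::field"
  shows "finite {r. \<exists>x. (\<exists>i<n. x i \<noteq> 0) \<and> (\<forall>i<n. (\<Sum>j=0..<n. c i j * x j) = r * x i)}"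
proof -
  define A where "A = mat n n (\<lambda>(i, j). c i j)"
  have A: "A \<in> carrier_mat n n" unfolding A_def by simp
  have "char_poly A \<noteq> 0" using degree_monic_char_poly[OF A] by auto
  then have "finite {r. poly (char_poly A) r = 0}" by (rule poly_roots_finite)
  then show ?thesis using eigenvalue_root_char_poly[OF A] eigenvalue_mat_iff[of n c] unfolding A_def by simp
qed

lemma indexed_eigenvalue_exists:
  fixes c :: "nat \<Rightarrow> nat \<Rightarrow> complex"
  assumes "0 < n"
  shows "\<exists>r x. (\<exists>i<n. x i \<noteq> 0) \<and> (\<forall>i<n. (\<Sum>j=0..<n. c i j * x j) = r * x i)"
proof -
  define A where "A = mat n n (\<lambda>(i, j). c i j)"
  have A: "A \<in> carrier_mat n n" unfolding A_def by simp
  have "\<not> constant (poly (char_poly A))"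
    using degree_monic_char_poly[OF A] assms by (simp add: constant_degree)
  then obtain r where "poly (char_poly A) r = 0" using fundamental_theorem_of_algebra by blast
  then show ?thesis
    using eigenvalue_root_char_poly[OF A] eigenvalue_mat_iff unfolding A_def by blast
qed

lemma symmetric_eigenvalue_real:
  fixes c :: "nat \<Rightarrow> nat \<Rightarrow> real" and z :: "nat \<Rightarrow> complex"
  assumes sym: "\<And>i j. c i j = c j i" and nonzero: "\<exists>i<n. z i \<noteq> 0"
    and eq: "\<forall>i<n. (\<Sum>j=0..<n. of_real (c i j) * z j) = k * z i"
  shows "k \<in> \<real>"
proof -
  define M where "M = (\<Sum>i=0..<n. \<Sum>j=0..<n. of_real (c i j) * (cnj (z i) * z j))"
  define N where "N = (\<Sum>i=0..<n. (cmod (z i))\<^sup>2)"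
  have "k * of_real N = M"
    unfolding M_def N_def of_real_sum sum_distrib_left
  proof (rule sum.cong[OF refl])
    fix i assume "i \<in> {0..<n}"
    have sq: "of_real ((cmod (z i))\<^sup>2) = cnj (z i) * z i"
      using complex_norm_square[of "z i"] by (simp add: mult.commute)
    have "k * of_real ((cmod (z i))\<^sup>2) = cnj (z i) * (k * z i)"
      unfolding sq by (simp add: algebra_simps)
    also have "\<dots> = cnj (z i) * (\<Sum>j=0..<n. of_real (c i j) * z j)"
      using eq \<open>i \<in> {0..<n}\<close> by simp
    finally show "k * of_real ((cmod (z i))\<^sup>2) = (\<Sum>j=0..<n. of_real (c i j) * (cnj (z i) * z j))"
      by (simp add: sum_distrib_left algebra_simps)
  qed
  moreover have "cnj M = M"
  proof -
    have "cnj M = (\<Sum>i=0..<n. \<Sum>j=0..<n. of_real (c j i) * (cnj (z j) * z i))"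
      unfolding M_def by (simp add: sym mult.commute)
    also have "\<dots> = M" unfolding M_def by (rule sum.swap)
    finally show ?thesis .
  qed
  moreover have "0 < N"
    using nonzero unfolding N_def by (auto intro: sum_pos2)
  ultimately have "cnj k * of_real N = k * of_real N"
    by (metis complex_cnj_complex_of_real complex_cnj_mult)
  then have "cnj k = k" using \<open>0 < N\<close> by simp
  then show ?thesis by (simp add: Reals_cnj_iff)
qed

lemma symmetric_indexed_real_eigenvalue_exists:
  fixes c :: "nat \<Rightarrow> nat \<Rightarrow> real"
  assumes "0 < n" and sym: "\<And>i j. c i j = c j i"
  shows "\<exists>r x. (\<exists>i<n. x i \<noteq> 0) \<and> (\<forall>i<n. (\<Sum>j=0..<n. c i j * x j) = r * x i)"
proof -
  obtain k and z :: "nat \<Rightarrow> complex" where nonzero: "\<exists>i<n. z i \<noteq> 0"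
    and eq: "\<forall>i<n. (\<Sum>j=0..<n. of_real (c i j) * z j) = k * z i"
    using indexed_eigenvalue_exists[OF \<open>0 < n\<close>, of "\<lambda>i j. of_real (c i j)"] by blast
  have "k \<in> \<real>" by (rule symmetric_eigenvalue_real[OF sym nonzero eq])
  then obtain r where r: "k = of_real r" by (auto elim: Reals_cases)
  have parts: "(\<Sum>j=0..<n. c i j * Re (z j)) = r * Re (z i)" "(\<Sum>j=0..<n. c i j * Im (z j)) = r * Im (z i)"
    if "i < n" for i
    using arg_cong[OF eq[rule_format, OF that], of Re] arg_cong[OF eq[rule_format, OF that], of Im] r
    by (simp_all add: Re_sum Im_sum)
  obtain i where "i < n" "z i \<noteq> 0" using nonzero by blast
  then consider "Re (z i) \<noteq> 0" | "Im (z i) \<noteq> 0" using complex_eqI[of "z i" 0] by auto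
  then show ?thesis
  proof cases
    case 1
    then show ?thesis using parts(1) \<open>i < n\<close> by (intro exI[of _ r] exI[of _ "\<lambda>j. Re (z j)"]) auto
  next
    case 2
    then show ?thesis using parts(2) \<open>i < n\<close> by (intro exI[of _ r] exI[of _ "\<lambda>j. Im (z j)"]) auto
  qed
qed

lemma adj_eigenvalue_iff_indexed:
  fixes f :: "nat \<Rightarrow> 'a" and n :: nat
  assumes f: "bij_betw f {0..<n} V"
  shows "adj_eigenvalue V E \<mu> \<longleftrightarrow> (\<exists>x. (\<exists>i<n. x i \<noteq> 0) \<and>
    (\<forall>i<n. (\<Sum>j=0..<n. (if {f i, f j} \<in> E then 1 else 0) * x j) = \<mu> * x i))"
proof -
  have fin: "finite V" using bij_betw_finite[OF f] by simp
  have reindex: "(\<Sum>j=0..<n. (if {f i, f j} \<in> E then 1 else 0) * x (f j))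
      = (\<Sum>u\<in>neighbours V E (f i). x u)" for x :: "'a \<Rightarrow> real" and i
    unfolding sum_neighbours_eq[OF fin] sum.reindex_bij_betw[OF f, symmetric]
    by (auto simp: insert_commute intro: sum.cong)
  have f_into: "f i \<in> V" if "i < n" for i using f that by (auto simp: bij_betw_def)
  define g where "g = inv_into {0..<n} f"
  have g: "g u < n" "f (g u) = u" if "u \<in> V" for u
    using f that unfolding g_def bij_betw_def by (auto intro: inv_into_into f_inv_into_f)
  have gf: "g (f i) = i" if "i < n" for i
    using f that unfolding g_def bij_betw_def by (auto intro: inv_into_f_f)
  show ?thesis
    unfolding adj_eigenvalue_iff_neighbours
  proof
    assume "\<exists>x. (\<exists>v\<in>V. x v \<noteq> 0) \<and> (\<forall>v\<in>V. (\<Sum>u\<in>neighbours V E v. x u) = \<mu> * x v)"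
    then obtain x v where "v \<in> V" "x v \<noteq> 0"
      and eq: "\<forall>v\<in>V. (\<Sum>u\<in>neighbours V E v. x u) = \<mu> * x v" by blast
    have "\<exists>i<n. x (f i) \<noteq> 0" using \<open>v \<in> V\<close> \<open>x v \<noteq> 0\<close> g by metis
    moreover have "\<forall>i<n. (\<Sum>j=0..<n. (if {f i, f j} \<in> E then 1 else 0) * x (f j)) = \<mu> * x (f i)"
      using eq f_into by (simp add: reindex)
    ultimately show "\<exists>y. (\<exists>i<n. y i \<noteq> 0) \<and>
        (\<forall>i<n. (\<Sum>j=0..<n. (if {f i, f j} \<in> E then 1 else 0) * y j) = \<mu> * y i)"
      by (intro exI[of _ "\<lambda>i. x (f i)"]) simp
  next
    assume "\<exists>y. (\<exists>i<n. y i \<noteq> 0) \<and>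
        (\<forall>i<n. (\<Sum>j=0..<n. (if {f i, f j} \<in> E then 1 else 0) * y j) = \<mu> * y i)"
    then obtain y i where "i < n" "y i \<noteq> 0"
      and eq: "\<forall>i<n. (\<Sum>j=0..<n. (if {f i, f j} \<in> E then 1 else 0) * y j) = \<mu> * y i" by blast
    have "\<exists>v\<in>V. y (g v) \<noteq> 0" using \<open>i < n\<close> \<open>y i \<noteq> 0\<close> f_into gf by metis
    moreover have "(\<Sum>u\<in>neighbours V E v. y (g u)) = \<mu> * y (g v)" if "v \<in> V" for v
    proof -
      have "(\<Sum>u\<in>neighbours V E v. y (g u)) = (\<Sum>j=0..<n. (if {f (g v), f j} \<in> E then 1 else 0) * y (g (f j)))"
        using reindex[where x = "\<lambda>u. y (g u)" and i = "g v"] g[OF that] by simp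
      also have "\<dots> = (\<Sum>j=0..<n. (if {f (g v), f j} \<in> E then 1 else 0) * y j)"
        using gf by (intro sum.cong) auto
      finally show ?thesis using eq[rule_format, OF g(1)[OF that]] g(2)[OF that] by simp
    qed
    ultimately show "\<exists>x. (\<exists>v\<in>V. x v \<noteq> 0) \<and> (\<forall>v\<in>V. (\<Sum>u\<in>neighbours V E v. x u) = \<mu> * x v)"
      by (intro exI[of _ "\<lambda>v. y (g v)"]) simp
  qed
qed

lemma finite_adj_eigenvalues:
  assumes "finite V"
  shows "finite {\<mu>. adj_eigenvalue V E \<mu>}"
proof -
  obtain f where f: "bij_betw f {0..<card V} V" using ex_bij_betw_nat_finite[OF assms] by blast
  show ?thesis
    unfolding adj_eigenvalue_iff_indexed[OF f] by (rule finite_indexed_eigenvalues)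
qed

lemma adj_eigenvalue_exists:
  assumes "finite V" "V \<noteq> {}"
  shows "\<exists>\<mu>. adj_eigenvalue V E \<mu>"
proof -
  obtain f where f: "bij_betw f {0..<card V} V" using ex_bij_betw_nat_finite[OF assms(1)] by blast
  have "0 < card V" using assms by (simp add: card_gt_0_iff)
  then show ?thesis
    unfolding adj_eigenvalue_iff_indexed[OF f]
    by (rule symmetric_indexed_real_eigenvalue_exists) (simp add: insert_commute)
qed

lemma spectral_radius_adj_eigenvalue:
  assumes "finite V" "V \<noteq> {}"
  shows "adj_eigenvalue V E (spectral_radius V E)"
  using Max_in[OF finite_adj_eigenvalues[OF assms(1)]] adj_eigenvalue_exists[OF assms]
  unfolding spectral_radius_def by auto

lemma adj_eigenvalue_le_spectral_radius:
  assumes "finite V" "adj_eigenvalue V E \<mu>"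
  shows "\<mu> \<le> spectral_radius V E"
  unfolding spectral_radius_def using finite_adj_eigenvalues[OF assms(1)] assms(2) by (intro Max_ge) auto

section \<open>The extremal graph \<open>H\<^sub>n\<^sub>,\<^sub>b\<close>\<close>

lemma H_edges_iff:
  "{u, v} \<in> H_edges n b \<longleftrightarrow> u < n \<and> v < n \<and> u \<noteq> v \<and> (u < b - 1 \<or> v < b - 1 \<or> (b \<le> u \<and> b \<le> v))"
  unfolding H_edges_def by (auto simp: doubleton_eq_iff)

lemma neighbours_H:
  assumes "2 \<le> b" "b \<le> n" "v < n"
  shows "v < b - 1 \<Longrightarrow> neighbours {0..<n} (H_edges n b) v = ({0..<b - 1} - {v}) \<union> {b - 1} \<union> {b..<n}"
    and "v = b - 1 \<Longrightarrow> neighbours {0..<n} (H_edges n b) v = {0..<b - 1}"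
    and "b \<le> v \<Longrightarrow> neighbours {0..<n} (H_edges n b) v = {0..<b - 1} \<union> ({b..<n} - {v})"
  using assms unfolding neighbours_def H_edges_iff by auto

text \<open>The partition of \<open>H\<^sub>n\<^sub>,\<^sub>b\<close> into \<open>K\<^sub>b\<^sub>-\<^sub>1\<close>, \<open>K\<^sub>1\<close>, \<open>K\<^sub>n\<^sub>-\<^sub>b\<close> is equitable with quotient matrix
  \<open>Q = [[b-2, 1, n-b], [b-1, 0, 0], [b-1, 0, n-b-1]]\<close>; \<open>H_cubic n b\<close> is its characteristic
  polynomial, and for a root \<open>\<theta>\<close> the vector \<open>(1, y\<^sub>2, y\<^sub>3)\<close> of \<open>H_quotient_equations\<close> solves
  \<open>Q z = \<theta> z\<close>; lifted to the vertices it is \<open>H_vec n b \<theta>\<close>.\<close>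

definition H_cubic :: "nat \<Rightarrow> nat \<Rightarrow> real \<Rightarrow> real" where
  "H_cubic n b \<theta> = (\<theta> - real b + 2) * \<theta> * (\<theta> - real n + real b + 1)
      - (real b - 1) * (\<theta> - real n + real b + 1) - (real n - real b) * (real b - 1) * \<theta>"

definition H_vec :: "nat \<Rightarrow> nat \<Rightarrow> real \<Rightarrow> nat \<Rightarrow> real" where
  "H_vec n b \<theta> u = (if u < b - 1 then 1 else if u = b - 1 then (real b - 1) / \<theta>
      else (real b - 1) / (\<theta> - real n + real b + 1))"

lemma H_cubic_root:
  assumes "2 \<le> b" "b + 1 \<le> n"
  shows "\<exists>\<theta>. real n - 2 < \<theta> \<and> H_cubic n b \<theta> = 0"
proof -
  have lower: "H_cubic n b (real n - 2) = - (real b - 1)\<^sup>2"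
    unfolding H_cubic_def by (simp add: power2_eq_square algebra_simps)
  have "(real b)\<^sup>2 \<le> (real n)\<^sup>2" using assms by (intro power_mono) auto
  moreover have "H_cubic n b (real n) = 2 * (real n)\<^sup>2 + 2 * real n + 1 - (real b)\<^sup>2"
    unfolding H_cubic_def by (simp add: power2_eq_square algebra_simps)
  moreover have "0 \<le> real n" "0 \<le> (real n)\<^sup>2" by simp_all
  ultimately have upper: "0 \<le> H_cubic n b (real n)" by linarith
  have "continuous_on {real n - 2 .. real n} (H_cubic n b)"
    unfolding H_cubic_def by (intro continuous_intros)
  then obtain \<theta> where "real n - 2 \<le> \<theta>" "\<theta> \<le> real n" "H_cubic n b \<theta> = 0"
    using IVT'[of "H_cubic n b" "real n - 2" 0 "real n"] lower upper by auto
  moreover have "\<theta> \<noteq> real n - 2" using \<open>H_cubic n b \<theta> = 0\<close> lower assms by auto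
  ultimately show ?thesis by (intro exI[of _ \<theta>]) auto
qed

lemma H_quotient_equations:
  fixes \<theta> :: real
  assumes pos: "0 < \<theta>" "0 < \<theta> - real n + real b + 1" and root: "H_cubic n b \<theta> = 0"
  defines "y2 \<equiv> (real b - 1) / \<theta>" and "y3 \<equiv> (real b - 1) / (\<theta> - real n + real b + 1)"
  shows "\<theta> * 1 = (real b - 2) * 1 + y2 + (real n - real b) * y3"
    and "\<theta> * y2 = (real b - 1) * 1"
    and "\<theta> * y3 = (real b - 1) * 1 + (real n - real b - 1) * y3"
proof -
  define D where "D = \<theta> - real n + real b + 1"
  have \<theta>y2: "\<theta> * y2 = real b - 1" and Dy3: "D * y3 = real b - 1"
    unfolding y2_def y3_def D_def using pos by auto
  have "H_cubic n b \<theta> = (\<theta> - real b + 2) * \<theta> * D - (real b - 1) * D - (real n - real b) * (real b - 1) * \<theta>"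
    unfolding H_cubic_def D_def ..
  moreover have "\<theta> * D * (\<theta> - ((real b - 2) + y2 + (real n - real b) * y3))
      = \<theta> * \<theta> * D - (real b - 2) * \<theta> * D - (\<theta> * y2) * D - (real n - real b) * \<theta> * (D * y3)"
    by (simp add: algebra_simps)
  ultimately have "\<theta> * D * (\<theta> - ((real b - 2) + y2 + (real n - real b) * y3)) = H_cubic n b \<theta>"
    unfolding \<theta>y2 Dy3 by (simp add: algebra_simps)
  then show "\<theta> * 1 = (real b - 2) * 1 + y2 + (real n - real b) * y3"
    using root pos unfolding D_def by simp
  show "\<theta> * y2 = (real b - 1) * 1" using \<theta>y2 by simp
  show "\<theta> * y3 = (real b - 1) * 1 + (real n - real b - 1) * y3"
    using Dy3 unfolding D_def by (simp add: algebra_simps)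
qed

lemma H_vec_eigenvector:
  assumes b: "2 \<le> b" and n: "b + 1 \<le> n" and \<theta>: "real n - 2 < \<theta>" and root: "H_cubic n b \<theta> = 0"
  shows "\<forall>u<n. 0 < H_vec n b \<theta> u"
    and "\<forall>v<n. (\<Sum>u\<in>neighbours {0..<n} (H_edges n b) v. H_vec n b \<theta> u) = \<theta> * H_vec n b \<theta> v"
proof -
  define y2 where "y2 = (real b - 1) / \<theta>"
  define y3 where "y3 = (real b - 1) / (\<theta> - real n + real b + 1)"
  have bn: "b \<le> n" using n by simp
  have pos: "0 < \<theta>" "0 < \<theta> - real n + real b + 1" using \<theta> b n by auto
  note eqs = H_quotient_equations[OF pos root, folded y2_def y3_def]
  have y: "H_vec n b \<theta> u = (if u < b - 1 then 1 else if u = b - 1 then y2 else y3)" for u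
    unfolding H_vec_def y2_def y3_def by simp
  show "\<forall>u<n. 0 < H_vec n b \<theta> u" unfolding y y2_def y3_def using pos b by auto
  have sum1: "(\<Sum>u\<in>{0..<b - 1} - A. H_vec n b \<theta> u) = real (card ({0..<b - 1} - A))" for A
    by (simp add: y)
  have "(\<Sum>u\<in>{b..<n} - A. H_vec n b \<theta> u) = (\<Sum>u\<in>{b..<n} - A. y3)" for A
    using b by (intro sum.cong) (auto simp: y)
  then have sum3: "(\<Sum>u\<in>{b..<n} - A. H_vec n b \<theta> u) = real (card ({b..<n} - A)) * y3" for A
    by simp
  show "\<forall>v<n. (\<Sum>u\<in>neighbours {0..<n} (H_edges n b) v. H_vec n b \<theta> u) = \<theta> * H_vec n b \<theta> v"
  proof (intro allI impI)
    fix v assume "v < n"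
    consider "v < b - 1" | "v = b - 1" | "b \<le> v" by linarith
    then show "(\<Sum>u\<in>neighbours {0..<n} (H_edges n b) v. H_vec n b \<theta> u) = \<theta> * H_vec n b \<theta> v"
    proof cases
      case 1
      have "(\<Sum>u\<in>({0..<b - 1} - {v}) \<union> {b - 1} \<union> {b..<n}. H_vec n b \<theta> u)
          = (\<Sum>u\<in>{0..<b - 1} - {v}. H_vec n b \<theta> u) + H_vec n b \<theta> (b - 1) + (\<Sum>u\<in>{b..<n} - {}. H_vec n b \<theta> u)"
        using b by (subst sum.union_disjoint, auto)+
      also have "\<dots> = (real b - 2) * 1 + y2 + (real n - real b) * y3"
        using 1 b n unfolding sum1 sum3 by (simp add: y of_nat_diff)
      also have "\<dots> = \<theta> * H_vec n b \<theta> v"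
        using 1 eqs(1) unfolding y by simp
      finally show ?thesis unfolding neighbours_H(1)[OF b bn \<open>v < n\<close> 1] .
    next
      case 2
      then show ?thesis
        unfolding neighbours_H(2)[OF b bn \<open>v < n\<close> 2] using sum1[of "{}"] eqs(2) b by (simp add: y of_nat_diff)
    next
      case 3
      have "(\<Sum>u\<in>{0..<b - 1} \<union> ({b..<n} - {v}). H_vec n b \<theta> u)
          = (\<Sum>u\<in>{0..<b - 1} - {}. H_vec n b \<theta> u) + (\<Sum>u\<in>{b..<n} - {v}. H_vec n b \<theta> u)"
        by (subst sum.union_disjoint) auto
      also have "\<dots> = \<theta> * H_vec n b \<theta> v"
        using 3 b \<open>v < n\<close> eqs(3) unfolding sum1 sum3 by (auto simp: y of_nat_diff)
      finally show ?thesis unfolding neighbours_H(3)[OF b bn \<open>v < n\<close> 3] .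
    qed
  qed
qed

lemma H_positive_eigenvector:
  assumes "2 \<le> b" "b + 1 \<le> n"
  obtains \<theta> y where "real n - 2 < \<theta>" "\<theta> \<le> spectral_radius {0..<n} (H_edges n b)"
    and "\<forall>u<n. 0 < y u" and "\<forall>v<n. (\<Sum>u\<in>neighbours {0..<n} (H_edges n b) v. y u) = \<theta> * y v"
proof -
  obtain \<theta> where \<theta>: "real n - 2 < \<theta>" "H_cubic n b \<theta> = 0" using H_cubic_root[OF assms] by blast
  note y = H_vec_eigenvector[OF assms \<theta>]
  have "adj_eigenvalue {0..<n} (H_edges n b) \<theta>"
    unfolding adj_eigenvalue_iff_neighbours using y assms
    by (intro exI[of _ "H_vec n b \<theta>"]) (auto intro!: bexI[of _ 0])
  then have "\<theta> \<le> spectral_radius {0..<n} (H_edges n b)"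
    by (intro adj_eigenvalue_le_spectral_radius) auto
  with \<theta> y show ?thesis using that by blast
qed


lemma spectral_radius_H_gt:
  assumes "2 \<le> b" "b + 1 \<le> n"
  shows "real n - 2 < spectral_radius {0..<n} (H_edges n b)"
  using H_positive_eigenvector[OF assms] by fastforce

section \<open>A Perron--Frobenius type comparison\<close>

text \<open>If \<open>E \<subseteq> F\<close> and \<open>F\<close> has a positive eigenvector \<open>y\<close> for \<open>\<theta>\<close>, then for an eigenvector \<open>x\<close> of \<open>E\<close>
  for \<open>\<mu> \<ge> \<theta>\<close> the quantity \<open>y\<^sup>T A\<^sub>E \<bar>x\<bar> - \<mu> y\<^sup>T \<bar>x\<bar> + \<bar>x\<bar>\<^sup>T (A\<^sub>F - A\<^sub>E) y = (\<theta> - \<mu>) y\<^sup>T \<bar>x\<bar>\<close> is a sum of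
  nonnegative terms, so each of them vanishes.\<close>

lemma eigenvector_comparison_terms_vanish:
  fixes x y :: "'a \<Rightarrow> real"
  assumes fin: "finite V"
    and sub: "\<forall>v\<in>V. neighbours V E v \<subseteq> neighbours V F v"
    and y_pos: "\<forall>v\<in>V. 0 < y v" and y_eq: "\<forall>v\<in>V. (\<Sum>u\<in>neighbours V F v. y u) = \<theta> * y v"
    and x_eq: "\<forall>v\<in>V. (\<Sum>u\<in>neighbours V E v. x u) = \<mu> * x v"
    and \<theta>: "0 \<le> \<theta>" "\<theta> \<le> \<mu>"
  shows "\<forall>v\<in>V. y v * ((\<Sum>u\<in>neighbours V E v. \<bar>x u\<bar>) - \<mu> * \<bar>x v\<bar>) = 0"
    and "\<forall>v\<in>V. \<bar>x v\<bar> * ((\<Sum>u\<in>neighbours V F v. y u) - (\<Sum>u\<in>neighbours V E v. y u)) = 0"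
proof -
  define z where "z v = \<bar>x v\<bar>" for v
  define t1 where "t1 v = y v * ((\<Sum>u\<in>neighbours V E v. z u) - \<mu> * z v)" for v
  define t2 where "t2 v = z v * ((\<Sum>u\<in>neighbours V F v. y u) - (\<Sum>u\<in>neighbours V E v. y u))" for v
  have t1: "0 \<le> t1 v" if "v \<in> V" for v
  proof -
    have "\<mu> * z v = \<bar>\<Sum>u\<in>neighbours V E v. x u\<bar>"
      using x_eq that \<theta> unfolding z_def by (simp add: abs_mult)
    also have "\<dots> \<le> (\<Sum>u\<in>neighbours V E v. z u)" unfolding z_def by (rule sum_abs)
    finally show ?thesis
      unfolding t1_def using y_pos that by (intro mult_nonneg_nonneg) (auto simp: less_imp_le)
  qed
  have t2: "0 \<le> t2 v" if "v \<in> V" for v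
  proof -
    have "(\<Sum>u\<in>neighbours V E v. y u) \<le> (\<Sum>u\<in>neighbours V F v. y u)"
      by (rule sum_mono2[OF finite_subset[OF neighbours_subset fin] sub[rule_format, OF that]])
        (use y_pos neighbours_subset in \<open>force simp: less_imp_le\<close>)
    then show ?thesis unfolding t2_def z_def by simp
  qed
  have "(\<Sum>v\<in>V. t1 v) + (\<Sum>v\<in>V. t2 v) = (\<theta> - \<mu>) * (\<Sum>v\<in>V. y v * z v)"
    using sum_neighbours_swap[OF fin, where f = y and g = z and E = E] y_eq
    unfolding t1_def t2_def
    by (simp add: sum_subtractf right_diff_distrib sum.distrib sum_distrib_left algebra_simps
        cong: sum.cong)
  also have "\<dots> \<le> 0"
    using \<theta> y_pos unfolding z_def by (intro mult_nonpos_nonneg sum_nonneg) (auto simp: less_imp_le)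
  finally have le: "(\<Sum>v\<in>V. t1 v) + (\<Sum>v\<in>V. t2 v) \<le> 0" .
  have "0 \<le> (\<Sum>v\<in>V. t1 v)" "0 \<le> (\<Sum>v\<in>V. t2 v)" using t1 t2 by (simp_all add: sum_nonneg)
  then have "(\<Sum>v\<in>V. t1 v) = 0" "(\<Sum>v\<in>V. t2 v) = 0" using le by linarith+
  then have "t1 v = 0" "t2 v = 0" if "v \<in> V" for v
    using sum_nonneg_eq_0_iff[OF fin, of t1] sum_nonneg_eq_0_iff[OF fin, of t2] t1 t2 that by auto
  then show "\<forall>v\<in>V. y v * ((\<Sum>u\<in>neighbours V E v. \<bar>x u\<bar>) - \<mu> * \<bar>x v\<bar>) = 0"
    and "\<forall>v\<in>V. \<bar>x v\<bar> * ((\<Sum>u\<in>neighbours V F v. y u) - (\<Sum>u\<in>neighbours V E v. y u)) = 0"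
    unfolding t1_def t2_def z_def by auto
qed

lemma eigenvector_comparison:
  fixes x y :: "'a \<Rightarrow> real"
  assumes fin: "finite V"
    and sub: "\<forall>v\<in>V. neighbours V E v \<subseteq> neighbours V F v"
    and y_pos: "\<forall>v\<in>V. 0 < y v" and y_eq: "\<forall>v\<in>V. (\<Sum>u\<in>neighbours V F v. y u) = \<theta> * y v"
    and x_eq: "\<forall>v\<in>V. (\<Sum>u\<in>neighbours V E v. x u) = \<mu> * x v"
    and \<theta>: "0 \<le> \<theta>" "\<theta> \<le> \<mu>"
  shows "\<forall>v\<in>V. x v \<noteq> 0 \<longrightarrow> neighbours V F v = neighbours V E v"
    and "\<forall>v\<in>V. x v = 0 \<longrightarrow> (\<forall>u\<in>neighbours V E v. x u = 0)"
proof -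
  note vanish = eigenvector_comparison_terms_vanish[OF assms]
  have fin_nbrs: "finite (neighbours V G v)" for G v
    using finite_subset[OF neighbours_subset fin] .
  show "\<forall>v\<in>V. x v \<noteq> 0 \<longrightarrow> neighbours V F v = neighbours V E v"
  proof (intro ballI impI)
    fix v assume "v \<in> V" "x v \<noteq> 0"
    then have "(\<Sum>u\<in>neighbours V F v - neighbours V E v. y u) = 0"
      using vanish(2)[rule_format, OF \<open>v \<in> V\<close>] sum.subset_diff[OF sub[rule_format] fin_nbrs, of v y]
      by simp
    moreover have "0 < y u" if "u \<in> neighbours V F v - neighbours V E v" for u
      using that y_pos neighbours_subset[of V F v] by auto
    ultimately have "neighbours V F v - neighbours V E v = {}"
      using sum_nonneg_eq_0_iff[of "neighbours V F v - neighbours V E v" y] fin_nbrs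
      by (fastforce simp: less_imp_le)
    then show "neighbours V F v = neighbours V E v" using sub \<open>v \<in> V\<close> by blast
  qed
  show "\<forall>v\<in>V. x v = 0 \<longrightarrow> (\<forall>u\<in>neighbours V E v. x u = 0)"
  proof (intro ballI impI)
    fix v u assume "v \<in> V" "x v = 0" "u \<in> neighbours V E v"
    then have "(\<Sum>u\<in>neighbours V E v. \<bar>x u\<bar>) = 0"
      using vanish(1)[rule_format, OF \<open>v \<in> V\<close>] y_pos[rule_format, OF \<open>v \<in> V\<close>] by simp
    then show "x u = 0"
      using sum_nonneg_eq_0_iff[OF fin_nbrs[of E v], of "\<lambda>u. \<bar>x u\<bar>"] \<open>u \<in> neighbours V E v\<close> by simp
  qed
qed

lemma neighbours_eq_if_eigenvalue_ge:
  assumes fin: "finite V"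
    and sub: "\<forall>v\<in>V. neighbours V E v \<subseteq> neighbours V F v"
    and dominating: "w \<in> V" "\<forall>v\<in>V. v \<noteq> w \<longrightarrow> v \<in> neighbours V F w"
    and y_pos: "\<forall>v\<in>V. 0 < y v" and y_eq: "\<forall>v\<in>V. (\<Sum>u\<in>neighbours V F v. y u) = \<theta> * y v"
    and \<mu>: "adj_eigenvalue V E \<mu>" and \<theta>: "0 \<le> \<theta>" "\<theta> \<le> \<mu>"
  shows "\<forall>v\<in>V. neighbours V F v = neighbours V E v"
proof -
  obtain x v1 where "v1 \<in> V" "x v1 \<noteq> 0" and x_eq: "\<forall>v\<in>V. (\<Sum>u\<in>neighbours V E v. x u) = \<mu> * x v"
    using \<mu> unfolding adj_eigenvalue_iff_neighbours by blast
  note cmp = eigenvector_comparison[OF fin sub y_pos y_eq x_eq \<theta>]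
  have adjacent_w: "w \<in> neighbours V E v" "v \<in> neighbours V E w" if "v \<in> V" "v \<noteq> w" "x v \<noteq> 0 \<or> x w \<noteq> 0" for v
  proof -
    have "v \<in> neighbours V F w" using dominating that by blast
    then have "w \<in> neighbours V F v" "v \<in> neighbours V F w"
      using neighbours_sym[OF that(1) dominating(1)] by auto
    moreover have "neighbours V F v = neighbours V E v \<or> neighbours V F w = neighbours V E w"
      using cmp(1) that dominating(1) by blast
    ultimately show "w \<in> neighbours V E v" "v \<in> neighbours V E w"
      using neighbours_sym[OF that(1) dominating(1)] by auto
  qed
  have "x w \<noteq> 0"
  proof
    assume "x w = 0"
    then have "v1 \<noteq> w" using \<open>x v1 \<noteq> 0\<close> by blast
    then have "v1 \<in> neighbours V E w" using adjacent_w(2) \<open>v1 \<in> V\<close> \<open>x v1 \<noteq> 0\<close> by blast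
    then show False using cmp(2) \<open>x w = 0\<close> \<open>x v1 \<noteq> 0\<close> dominating(1) by blast
  qed
  have "x v \<noteq> 0" if "v \<in> V" for v
  proof
    assume "x v = 0"
    then have "v \<noteq> w" using \<open>x w \<noteq> 0\<close> by blast
    then have "w \<in> neighbours V E v" using adjacent_w(1) \<open>x w \<noteq> 0\<close> that by blast
    then show False using cmp(2) \<open>x v = 0\<close> \<open>x w \<noteq> 0\<close> that by blast
  qed
  then show ?thesis using cmp(1) by blast
qed

lemma exists_labelling_low_degree:
  fixes V :: "'a set"
  assumes fin: "finite V" and V: "card V = n" and v0: "v0 \<in> V" "v0 \<notin> N" and N: "N \<subseteq> V"
    and deg: "card N \<le> b - 1" and bn: "b \<le> n"
  obtains f where "bij_betw f V {0..<n}" "f v0 = b - 1" "\<forall>u\<in>N. f u < b - 1"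
proof -
  define d where "d = card N"
  define R where "R = V - N - {v0}"
  define L where "L = {0..<n} - {b - 1} - {0..<d}"
  have "0 < n" using fin v0 V card_gt_0_iff by blast
  then have label: "b - 1 \<in> {d..<n}" using deg bn unfolding d_def by auto
  have "card R = n - 1 - d"
    using card_Diff_subset[OF finite_subset[OF N fin] N] V v0 unfolding R_def d_def
    by (simp add: card_Diff_singleton)
  moreover have "card L = n - 1 - d"
  proof -
    have "L = {d..<n} - {b - 1}" unfolding L_def by auto
    then show ?thesis using label by (simp add: card_Diff_singleton)
  qed
  ultimately obtain g2 where g2: "bij_betw g2 R L"
    using finite_same_card_bij[of R L] fin unfolding R_def L_def by auto
  obtain g1 where g1: "bij_betw g1 N {0..<d}"
    using ex_bij_betw_finite_nat[OF finite_subset[OF N fin]] unfolding d_def by blast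
  define f where "f u = (if u = v0 then b - 1 else if u \<in> N then g1 u else g2 u)" for u
  have "f u = g1 u" if "u \<in> N" for u using that v0(2) unfolding f_def by auto
  then have "bij_betw f N {0..<d}" using g1 bij_betw_cong[of N f g1 "{0..<d}"] by simp
  moreover have "f u = g2 u" if "u \<in> R" for u using that unfolding f_def R_def by auto
  then have "bij_betw f R L" using g2 bij_betw_cong[of R f g2 L] by simp
  ultimately have "bij_betw f (N \<union> R) ({0..<d} \<union> L)"
    by (rule bij_betw_combine) (auto simp: R_def L_def)
  moreover have "v0 \<notin> N \<union> R" "f v0 \<notin> {0..<d} \<union> L"
    using v0 label unfolding f_def R_def L_def by auto
  ultimately have "bij_betw f ((N \<union> R) \<union> {v0}) (({0..<d} \<union> L) \<union> {f v0})"
    by (intro notIn_Un_bij_betw)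
  moreover have "(N \<union> R) \<union> {v0} = V" "({0..<d} \<union> L) \<union> {f v0} = {0..<n}"
    using v0 N label unfolding R_def L_def f_def by auto
  ultimately have "bij_betw f V {0..<n}" by simp
  moreover have "g1 u < d" if "u \<in> N" for u using g1 that by (auto simp: bij_betw_def)
  then have "\<forall>u\<in>N. f u < b - 1" using v0(2) label unfolding f_def by fastforce
  ultimately show ?thesis using that unfolding f_def by simp
qed

lemma edge_image_in_H:
  assumes G: "simple_graph V E" and f: "bij_betw f V {0..<n}" and "f v0 = b - 1" "v0 \<in> V"
    and low: "\<forall>u\<in>neighbours V E v0. f u < b - 1" and "{u, w} \<in> E"
  shows "{f u, f w} \<in> H_edges n b"
proof -
  from G \<open>{u, w} \<in> E\<close> obtain u' w' where "u' \<noteq> w'" "{u, w} = {u', w'}" "u' \<in> V" "w' \<in> V"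
    by (rule simple_graph_edgeE)
  then have uw: "u \<noteq> w" "u \<in> V" "w \<in> V" by (auto simp: doubleton_eq_iff)
  have f_inj: "f x = f y \<longleftrightarrow> x = y" if "x \<in> V" "y \<in> V" for x y
    using f that unfolding bij_betw_def inj_on_def by blast
  have "f u < b - 1 \<or> f w < b - 1 \<or> (b \<le> f u \<and> b \<le> f w)"
  proof (cases "u = v0 \<or> w = v0")
    case True
    then have "w \<in> neighbours V E v0 \<or> u \<in> neighbours V E v0"
      using uw \<open>{u, w} \<in> E\<close> unfolding neighbours_def by (auto simp: insert_commute)
    then show ?thesis using low by auto
  next
    case False
    then have "f u \<noteq> b - 1" "f w \<noteq> b - 1" using f_inj uw \<open>f v0 = b - 1\<close> \<open>v0 \<in> V\<close> by metis+
    then show ?thesis by auto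
  qed
  moreover have "f u < n" "f w < n" "f u \<noteq> f w" using f uw f_inj by (auto simp: bij_betw_def)
  ultimately show ?thesis unfolding H_edges_iff by blast
qed

lemma sum_neighbours_pullback:
  assumes f: "bij_betw f V W" and "v \<in> V"
  shows "(\<Sum>u\<in>neighbours V {e. f ` e \<in> F} v. y (f u)) = (\<Sum>u\<in>neighbours W F (f v). y u)"
proof -
  have "inj_on f (neighbours V {e. f ` e \<in> F} v)"
    using f neighbours_subset unfolding bij_betw_def by (rule inj_on_subset[OF conjunct1])
  moreover have "neighbours W F (f v) = f ` neighbours V {e. f ` e \<in> F} v"
    using f unfolding bij_betw_def neighbours_def by auto
  ultimately show ?thesis by (rule sum.reindex_cong[symmetric]) simp
qed

lemma graph_iso_H_if_low_degree:
  assumes G: "simple_graph V E" and V: "card V = n" and b: "2 \<le> b" "b + 1 \<le> n"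
    and v0: "v0 \<in> V" "card (neighbours V E v0) \<le> b - 1"
    and y_pos: "\<forall>u<n. 0 < y u"
    and y_eq: "\<forall>v<n. (\<Sum>u\<in>neighbours {0..<n} (H_edges n b) v. y u) = \<theta> * y v"
    and \<mu>: "adj_eigenvalue V E \<mu>" and \<theta>: "0 \<le> \<theta>" "\<theta> \<le> \<mu>"
  shows "graph_iso V E {0..<n} (H_edges n b)"
proof -
  have fin: "finite V" using G unfolding simple_graph_def by simp
  obtain f where f: "bij_betw f V {0..<n}" and "f v0 = b - 1"
    and low: "\<forall>u\<in>neighbours V E v0. f u < b - 1"
    using exists_labelling_low_degree[OF fin V v0(1) self_notin_neighbours[OF G] neighbours_subset v0(2)] b
    by auto
  define F where "F = {e. f ` e \<in> H_edges n b}"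
  have F_iff: "{u, w} \<in> F \<longleftrightarrow> {f u, f w} \<in> H_edges n b" for u w unfolding F_def by simp
  have f_into: "f u < n" if "u \<in> V" for u using f that by (auto simp: bij_betw_def)
  have inj: "inj_on f V" using f by (simp add: bij_betw_def)
  have sub: "\<forall>v\<in>V. neighbours V E v \<subseteq> neighbours V F v"
    using edge_image_in_H[OF G f \<open>f v0 = b - 1\<close> v0(1) low] unfolding neighbours_def F_iff by blast
  have "0 \<in> f ` V" using f b by (simp add: bij_betw_def)
  then obtain w where w: "w \<in> V" "f w = 0" by auto
  have dominating: "\<forall>v\<in>V. v \<noteq> w \<longrightarrow> v \<in> neighbours V F w"
  proof (intro ballI impI)
    fix v assume "v \<in> V" "v \<noteq> w"
    then have "f v \<noteq> 0" using inj w inj_on_eq_iff by metis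
    then show "v \<in> neighbours V F w"
      unfolding neighbours_def F_iff H_edges_iff using \<open>v \<in> V\<close> f_into w b by auto
  qed
  have pos: "\<forall>v\<in>V. 0 < y (f v)" using y_pos f_into by blast
  have eq: "\<forall>v\<in>V. (\<Sum>u\<in>neighbours V F v. y (f u)) = \<theta> * y (f v)"
  proof
    fix v assume "v \<in> V"
    then show "(\<Sum>u\<in>neighbours V F v. y (f u)) = \<theta> * y (f v)"
      using sum_neighbours_pullback[OF f \<open>v \<in> V\<close>, where F = "H_edges n b" and y = y] y_eq f_into
      unfolding F_def by simp
  qed
  have "\<forall>v\<in>V. neighbours V F v = neighbours V E v"
    by (rule neighbours_eq_if_eigenvalue_ge[OF fin sub w(1) dominating pos eq \<mu> \<theta>])
  then have "{u, v} \<in> E \<longleftrightarrow> {f u, f v} \<in> H_edges n b" if "u \<in> V" "v \<in> V" for u v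
    using that unfolding neighbours_def F_iff by (auto simp: set_eq_iff)
  then show ?thesis unfolding graph_iso_def using f by blast
qed

lemma order_bound_consequences:
  fixes a b n :: nat
  assumes a: "1 \<le> a" "a < b" and n: "3 * real b * (real b + real a + 1) / real a + 7 \<le> real n"
  shows "3 * real b * (real b + real a + 1) + 7 * real a \<le> real a * real n" and "2 \<le> b" and "b + 1 \<le> n"
proof -
  show "3 * real b * (real b + real a + 1) + 7 * real a \<le> real a * real n"
    using a n by (simp add: field_simps)
  have "3 * real b * real a \<le> 3 * real b * (real b + real a + 1)" by (intro mult_left_mono) auto
  then have "3 * real b \<le> 3 * real b * (real b + real a + 1) / real a"
    using a by (simp add: le_divide_eq)
  then show "2 \<le> b" "b + 1 \<le> n" using a n by linarith+
qed

lemma min_degree_if_spectral_radius_ge_H: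
  assumes G: "simple_graph V E" and V: "card V = n" and b: "2 \<le> b" "b + 1 \<le> n"
    and \<rho>: "spectral_radius {0..<n} (H_edges n b) \<le> spectral_radius V E"
    and not_iso: "\<not> graph_iso V E {0..<n} (H_edges n b)"
  shows "\<forall>v\<in>V. b \<le> card (neighbours V E v)"
proof (rule ccontr)
  assume "\<not> ?thesis"
  then obtain v0 where v0: "v0 \<in> V" "card (neighbours V E v0) \<le> b - 1" by force
  obtain \<theta> y where \<theta>: "real n - 2 < \<theta>" "\<theta> \<le> spectral_radius {0..<n} (H_edges n b)"
    and y: "\<forall>u<n. 0 < y u" "\<forall>v<n. (\<Sum>u\<in>neighbours {0..<n} (H_edges n b) v. y u) = \<theta> * y v"
    using H_positive_eigenvector[OF b] by blast
  have "finite V" using G unfolding simple_graph_def by simp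
  then have "adj_eigenvalue V E (spectral_radius V E)"
    using v0(1) by (intro spectral_radius_adj_eigenvalue) auto
  then have "graph_iso V E {0..<n} (H_edges n b)"
    using graph_iso_H_if_low_degree[OF G V b v0 y] \<theta> \<rho> b by auto
  with not_iso show False by contradiction
qed

theorem theorem1p8:
  fixes V :: "'a set" and E :: "'a set set" and a b n :: nat
  assumes "simple_graph V E"
    and "1 \<le> a" and "a < b"
    and "card V = n"
    and "real n \<ge> 3 * real b * (real b + real a + 1) / real a + 7"
    and "spectral_radius V E \<ge> spectral_radius {0..<n} (H_edges n b)"
    and "\<not> graph_iso V E {0..<n} (H_edges n b)"
  shows "all_fractional_factors V E a b"
proof (rule ccontr)
  assume no_factors: "\<not> all_fractional_factors V E a b"
  note G = assms(1) and V = assms(4) and n = order_bound_consequences[OF assms(2,3,5)]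
  have deg: "\<forall>v\<in>V. b \<le> card (neighbours V E v)"
    using min_degree_if_spectral_radius_ge_H[OF G V n(2,3) assms(6,7)] .
  define \<mu> where "\<mu> = spectral_radius V E"
  have "finite V" "V \<noteq> {}" using G V n(3) unfolding simple_graph_def by auto
  then have \<mu>: "adj_eigenvalue V E \<mu>" unfolding \<mu>_def by (rule spectral_radius_adj_eigenvalue)
  have "\<mu>\<^sup>2 \<le> 2 * real (card E) - real n + 1"
    using adj_eigenvalue_sq_le[OF G V _ \<mu>] deg n(2) by force
  also have "\<dots> \<le> (real n - 2)\<^sup>2 - 1"
    using card_edges_le_if_not_all_fractional_factors[OF G V deg assms(2,3) n(1) no_factors]
    by (simp add: power2_eq_square algebra_simps)
  also have "\<dots> < \<mu>\<^sup>2"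
    using power_strict_mono[of "real n - 2" \<mu> 2] spectral_radius_H_gt[OF n(2,3)] assms(6) n(2,3)
    unfolding \<mu>_def by simp
  finally show False by simp
qed

end
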